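(* Let $C$ be a finite acyclic category and let $F\colon C\to C$ be a functor. Then: (a) $\mathcal{L}_R(F)=\chi\big(R(C)^{R(F)}\big)$; (b) $\mathcal{L}(F)=\chi(C^F)$. Moreover, if $\mathcal{L}_R(F)\neq 0$ or $\mathcal{L}(F)\neq 0$, then there exists at least one object $x$ of $C$ with $F(x)=x$.
   Context: An acyclic (loop-free) category is a small category in which only identity morphisms have inverses and the only morphism from an object to itself is the identity; it is finite if it has finitely many morphisms. The nerve $\Delta(C)$ of an acyclic category $C$ is the regular trisp (generalized simplicial complex, simplices may share vertex sets) whose vertices are the objects of $C$ and which has one $k$-simplex for each chain $x_0\xrightarrow{\alpha_1}x_1\to\cdots\xrightarrow{\alpha_k}x_k$ of $k\ge 1$ composable non-identity morphisms; a functor $F$ induces the map $\Delta(F)$ sending such a chain to $F(x_0)\xrightarrow{F(\alpha_1)}\cdots\xrightarrow{F(\alpha_k)}F(x_k)$. Homology and Euler characteristic $\chi$ of an acyclic category are those of its nerve (a poset is regarded as an acyclic category with one arrow $x\to y$ iff $x\le y$, so its nerve is its order complex); $\chi(\emptyset)=0$. For a self-map $f$ of such a finite complex, the Lefschetz number is $\mathcal{L}(f)=\sum_{i\ge0}(-1)^i\,\mathrm{trace}(H_i(f))$ with rational coefficients. $R(C)$ is the poset on the objects of $C$ with $x\le y$ iff there is a morphism $x\to y$, and $R(F)\colon R(C)\to R(C)$ is the order-preserving map $x\mapsto F(x)$; $R(C)^{R(F)}$ is the subposet of elements fixed by $R(F)$. Define $\mathcal{L}(F)=\mathcal{L}(\Delta(F))$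 and $\mathcal{L}_R(F)=\mathcal{L}(R(F))$. The fixed subcategory $C^F$ is the acyclic category whose objects are the objects $x$ with $F(x)=x$ and whose morphisms are the morphisms $\alpha$ with $F(\alpha)=\alpha$. *)

theory Defs
  imports Complex_Main
begin

record ('o, 'm) cat =
  Ob  :: "'o set"
  Mor :: "'m set"
  Dm  :: "'m \<Rightarrow> 'o"
  Cd  :: "'m \<Rightarrow> 'o"
  Idt :: "'o \<Rightarrow> 'm"
  Cmp :: "'m \<Rightarrow> 'm \<Rightarrow> 'm"   \<comment> \<open>Cmp C b a = b o a (first a, then b)\<close>

definition is_category :: "('o, 'm) cat \<Rightarrow> bool" where
  "is_category C \<longleftrightarrow>
     (\<forall>a\<in>Mor C. Dm C a \<in> Ob C \<and> Cd C a \<in> Ob C) \<and>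
     (\<forall>x\<in>Ob C. Idt C x \<in> Mor C \<and> Dm C (Idt C x) = x \<and> Cd C (Idt C x) = x) \<and>
     (\<forall>a\<in>Mor C. \<forall>b\<in>Mor C. Cd C a = Dm C b \<longrightarrow>
        Cmp C b a \<in> Mor C \<and> Dm C (Cmp C b a) = Dm C a \<and> Cd C (Cmp C b a) = Cd C b) \<and>
     (\<forall>a\<in>Mor C. \<forall>b\<in>Mor C. \<forall>c\<in>Mor C. Cd C a = Dm C b \<and> Cd C b = Dm C c \<longrightarrow>
        Cmp C c (Cmp C b a) = Cmp C (Cmp C c b) a) \<and>
     (\<forall>a\<in>Mor C. Cmp C (Idt C (Cd C a)) a = a \<and> Cmp C a (Idt C (Dm C a)) = a)"

definition is_identity :: "('o, 'm) cat \<Rightarrow> 'm \<Rightarrow> bool" where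
  "is_identity C a \<longleftrightarrow> a = Idt C (Dm C a)"

definition acyclic_cat :: "('o, 'm) cat \<Rightarrow> bool" where
  "acyclic_cat C \<longleftrightarrow> is_category C \<and>
     (\<forall>a\<in>Mor C. (\<exists>b\<in>Mor C. Dm C b = Cd C a \<and> Cd C b = Dm C a \<and>
         Cmp C b a = Idt C (Dm C a) \<and> Cmp C a b = Idt C (Cd C a)) \<longrightarrow> is_identity C a) \<and>
     (\<forall>a\<in>Mor C. Dm C a = Cd C a \<longrightarrow> is_identity C a)"

definition finite_acyclic_cat :: "('o, 'm) cat \<Rightarrow> bool" where
  "finite_acyclic_cat C \<longleftrightarrow> acyclic_cat C \<and> finite (Mor C)"

definition is_functor :: "('o, 'm) cat \<Rightarrow> ('o \<Rightarrow> 'o) \<Rightarrow> ('m \<Rightarrow> 'm) \<Rightarrow> bool" where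
  "is_functor C Fo Fm \<longleftrightarrow>
     (\<forall>x\<in>Ob C. Fo x \<in> Ob C) \<and>
     (\<forall>a\<in>Mor C. Fm a \<in> Mor C \<and> Dm C (Fm a) = Fo (Dm C a) \<and> Cd C (Fm a) = Fo (Cd C a)) \<and>
     (\<forall>x\<in>Ob C. Fm (Idt C x) = Idt C (Fo x)) \<and>
     (\<forall>a\<in>Mor C. \<forall>b\<in>Mor C. Cd C a = Dm C b \<longrightarrow> Fm (Cmp C b a) = Cmp C (Fm b) (Fm a))"

definition fixed_cat :: "('o, 'm) cat \<Rightarrow> ('o \<Rightarrow> 'o) \<Rightarrow> ('m \<Rightarrow> 'm) \<Rightarrow> ('o, 'm) cat" where
  "fixed_cat C Fo Fm = C\<lparr>Ob := {x \<in> Ob C. Fo x = x}, Mor := {a \<in> Mor C. Fm a = a}\<rparr>"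

definition poset_cat :: "'o set \<Rightarrow> ('o \<Rightarrow> 'o \<Rightarrow> bool) \<Rightarrow> ('o, 'o \<times> 'o) cat" where
  "poset_cat P le = \<lparr>Ob = P, Mor = {(x, y). x \<in> P \<and> y \<in> P \<and> le x y},
     Dm = fst, Cd = snd, Idt = (\<lambda>x. (x, x)), Cmp = (\<lambda>b a. (fst a, snd b))\<rparr>"

definition reach :: "('o, 'm) cat \<Rightarrow> 'o \<Rightarrow> 'o \<Rightarrow> bool" where
  "reach C x y \<longleftrightarrow> (\<exists>a\<in>Mor C. Dm C a = x \<and> Cd C a = y)"

definition Rcat :: "('o, 'm) cat \<Rightarrow> ('o, 'o \<times> 'o) cat" where
  "Rcat C = poset_cat (Ob C) (reach C)"

definition Rmor :: "('o \<Rightarrow> 'o) \<Rightarrow> 'o \<times> 'o \<Rightarrow> 'o \<times> 'o" where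
  "Rmor Fo p = (Fo (fst p), Fo (snd p))"

definition Rfix :: "('o, 'm) cat \<Rightarrow> ('o \<Rightarrow> 'o) \<Rightarrow> ('o, 'o \<times> 'o) cat" where
  "Rfix C Fo = poset_cat {x \<in> Ob C. Fo x = x} (reach C)"

text \<open>A k-simplex is represented as (x0, [a1,...,ak]); for k = 0 just (x, []).\<close>
definition Simp :: "('o, 'm) cat \<Rightarrow> nat \<Rightarrow> ('o \<times> 'm list) set" where
  "Simp C k = {(x, ms). length ms = k \<and>
     (ms = [] \<longrightarrow> x \<in> Ob C) \<and>
     (ms \<noteq> [] \<longrightarrow> x = Dm C (hd ms)) \<and>
     set ms \<subseteq> Mor C \<and> (\<forall>a\<in>set ms. \<not> is_identity C a) \<and>
     (\<forall>i. Suc i < k \<longrightarrow> Cd C (ms ! i) = Dm C (ms ! Suc i))}"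

definition vert :: "('o, 'm) cat \<Rightarrow> 'o \<times> 'm list \<Rightarrow> nat \<Rightarrow> 'o" where
  "vert C s j = (if j = 0 then fst s else Cd C (snd s ! (j - 1)))"

text \<open>i-th face (delete vertex i) of a simplex of dimension k = length ms >= 1.\<close>
definition face :: "('o, 'm) cat \<Rightarrow> 'o \<times> 'm list \<Rightarrow> nat \<Rightarrow> 'o \<times> 'm list" where
  "face C s i = (let ms = snd s; k = length ms in
     if i = 0 then (vert C s 1, tl ms)
     else if i = k then (fst s, butlast ms)
     else (fst s, take (i - 1) ms @ [Cmp C (ms ! i) (ms ! (i - 1))] @ drop (i + 1) ms))"

definition lincomb :: "rat list \<Rightarrow> ('s \<Rightarrow> rat) list \<Rightarrow> 's \<Rightarrow> rat" where
  "lincomb cs vs = (\<lambda>s. \<Sum>i<length vs. cs ! i * (vs ! i) s)"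

definition lspan :: "('s \<Rightarrow> rat) list \<Rightarrow> ('s \<Rightarrow> rat) set" where
  "lspan vs = {lincomb cs vs | cs. length cs = length vs}"

definition lindep_free :: "('s \<Rightarrow> rat) list \<Rightarrow> bool" where
  "lindep_free vs \<longleftrightarrow> (\<forall>cs. length cs = length vs \<and> lincomb cs vs = (\<lambda>_. 0) \<longrightarrow>
      (\<forall>i<length cs. cs ! i = 0))"

definition is_basis :: "('s \<Rightarrow> rat) set \<Rightarrow> ('s \<Rightarrow> rat) list \<Rightarrow> bool" where
  "is_basis W vs \<longleftrightarrow> lindep_free vs \<and> lspan vs = W"

definition coord :: "('s \<Rightarrow> rat) list \<Rightarrow> ('s \<Rightarrow> rat) \<Rightarrow> rat list" where
  "coord vs v = (THE cs. length cs = length vs \<and> lincomb cs vs = v)"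

text \<open>A basis bs of B extended by cs to a basis of Z; the images of cs form a basis of Z/B.\<close>
definition adapted_basis :: "('s \<Rightarrow> rat) set \<Rightarrow> ('s \<Rightarrow> rat) set \<Rightarrow>
    ('s \<Rightarrow> rat) list \<times> ('s \<Rightarrow> rat) list" where
  "adapted_basis Z B = (SOME p. is_basis B (fst p) \<and> is_basis Z (fst p @ snd p))"

definition quot_dim :: "('s \<Rightarrow> rat) set \<Rightarrow> ('s \<Rightarrow> rat) set \<Rightarrow> nat" where
  "quot_dim Z B = length (snd (adapted_basis Z B))"

text \<open>Trace of the map induced on Z/B by f (with f Z <= Z, f B <= B).\<close>
definition quot_trace :: "('s \<Rightarrow> rat) set \<Rightarrow> ('s \<Rightarrow> rat) set \<Rightarrow>
    (('s \<Rightarrow> rat) \<Rightarrow> ('s \<Rightarrow> rat)) \<Rightarrow> rat" where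
  "quot_trace Z B f = (let p = adapted_basis Z B; bs = fst p; cs = snd p in
     \<Sum>j<length cs. coord (bs @ cs) (f (cs ! j)) ! (length bs + j))"

definition supported :: "('s \<Rightarrow> rat) \<Rightarrow> 's set \<Rightarrow> bool" where
  "supported c S \<longleftrightarrow> (\<forall>s. c s \<noteq> 0 \<longrightarrow> s \<in> S)"

definition chains :: "('o, 'm) cat \<Rightarrow> nat \<Rightarrow> ('o \<times> 'm list \<Rightarrow> rat) set" where
  "chains C k = {c. supported c (Simp C k)}"

definition bd :: "('o, 'm) cat \<Rightarrow> nat \<Rightarrow> ('o \<times> 'm list \<Rightarrow> rat) \<Rightarrow> ('o \<times> 'm list \<Rightarrow> rat)" where
  "bd C k c = (if k = 0 then (\<lambda>_. 0) else
     (\<lambda>t. \<Sum>s\<in>Simp C k. c s * (\<Sum>i\<le>k. if face C s i = t then (-1) ^ i else 0)))"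

definition cycles :: "('o, 'm) cat \<Rightarrow> nat \<Rightarrow> ('o \<times> 'm list \<Rightarrow> rat) set" where
  "cycles C k = {c \<in> chains C k. bd C k c = (\<lambda>_. 0)}"

definition boundaries :: "('o, 'm) cat \<Rightarrow> nat \<Rightarrow> ('o \<times> 'm list \<Rightarrow> rat) set" where
  "boundaries C k = bd C (Suc k) ` chains C (Suc k)"

text \<open>Chain map induced by Delta(F): a simplex goes to its image chain if no arrow is
  sent to an identity, and to 0 otherwise (its image is degenerate).\<close>
definition chain_map :: "('o, 'm) cat \<Rightarrow> ('o \<Rightarrow> 'o) \<Rightarrow> ('m \<Rightarrow> 'm) \<Rightarrow> nat \<Rightarrow>
    ('o \<times> 'm list \<Rightarrow> rat) \<Rightarrow> ('o \<times> 'm list \<Rightarrow> rat)" where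
  "chain_map C Fo Fm k c = (\<lambda>t. \<Sum>s\<in>Simp C k.
     if (\<forall>a\<in>set (snd s). \<not> is_identity C (Fm a)) \<and> (Fo (fst s), map Fm (snd s)) = t
     then c s else 0)"

text \<open>Lefschetz number of Delta(F) (rational homology). The nerve of a finite acyclic
  category has no simplices of dimension >= card (Mor C), so the sum is complete.\<close>
definition lefschetz :: "('o, 'm) cat \<Rightarrow> ('o \<Rightarrow> 'o) \<Rightarrow> ('m \<Rightarrow> 'm) \<Rightarrow> rat" where
  "lefschetz C Fo Fm = (\<Sum>i\<le>card (Mor C).
     (-1) ^ i * quot_trace (cycles C i) (boundaries C i) (chain_map C Fo Fm i))"

definition euler :: "('o, 'm) cat \<Rightarrow> int" where
  "euler C = (\<Sum>i\<le>card (Mor C). (-1) ^ i * int (quot_dim (cycles C i) (boundaries C i)))"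

end

theory Submission
  imports Defs "HOL-Library.Function_Algebras"
begin

(* F induces a chain endomorphism of the rational simplicial chains of the nerve, and by the
   Hopf trace formula its Lefschetz number is the alternating sum of its traces on the chain
   groups. In the basis of simplices the diagonal entry at a simplex is 1 if F fixes its base
   object and all its arrows, and 0 otherwise (in particular when F collapses an arrow to an
   identity). The fixed simplices are exactly the simplices of the nerve of C^F, so L(F) is the
   alternating count of simplices of C^F, which is chi(C^F) by the same formula applied to the
   identity. Part (a) is part (b) for the poset category R(C), whose fixed subcategory under
   R(F) is R(C)^R(F). If F fixes no object, C^F and R(C)^R(F) are empty, so both numbers
   vanish. *)

section \<open>Linear algebra on rational-valued functions\<close>

definition lcomb :: "(nat \<Rightarrow> rat) \<Rightarrow> ('s \<Rightarrow> rat) list \<Rightarrow> 's \<Rightarrow> rat" where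
  "lcomb c vs = (\<lambda>s. \<Sum>i<length vs. c i * (vs ! i) s)"

definition qlinear :: "(('s \<Rightarrow> rat) \<Rightarrow> ('t \<Rightarrow> rat)) \<Rightarrow> bool" where
  "qlinear f \<longleftrightarrow> (\<forall>u v a b. f (\<lambda>s. a * u s + b * v s) = (\<lambda>s. a * f u s + b * f v s))"

definition qsubspace :: "('s \<Rightarrow> rat) set \<Rightarrow> bool" where
  "qsubspace W \<longleftrightarrow> (\<lambda>_. 0) \<in> W \<and> (\<forall>u\<in>W. \<forall>v\<in>W. \<forall>a b. (\<lambda>s. a * u s + b * v s) \<in> W)"

definition coordinate :: "('s \<Rightarrow> rat) list \<Rightarrow> ('s \<Rightarrow> rat) \<Rightarrow> nat \<Rightarrow> rat" where
  "coordinate vs v i = coord vs v ! i"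

definition basis_trace :: "('s \<Rightarrow> rat) list \<Rightarrow> (('s \<Rightarrow> rat) \<Rightarrow> ('s \<Rightarrow> rat)) \<Rightarrow> rat" where
  "basis_trace vs f = (\<Sum>j<length vs. coordinate vs (f (vs ! j)) j)"

definition subspace_trace :: "('s \<Rightarrow> rat) set \<Rightarrow> (('s \<Rightarrow> rat) \<Rightarrow> ('s \<Rightarrow> rat)) \<Rightarrow> rat" where
  "subspace_trace W f = basis_trace (SOME vs. is_basis W vs) f"

lemma lincomb_eq_lcomb: "lincomb cs vs = lcomb (nth cs) vs"
  by (simp add: lincomb_def lcomb_def)

lemma lcomb_cong: "(\<And>i. i < length vs \<Longrightarrow> c i = d i) \<Longrightarrow> lcomb c vs = lcomb d vs"
  by (auto simp: lcomb_def intro!: sum.cong)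

lemma lcomb_eq_lincomb: "lcomb c vs = lincomb (map c [0..<length vs]) vs"
  unfolding lincomb_eq_lcomb by (auto intro!: lcomb_cong)

lemma lspan_eq_range_lcomb: "lspan vs = range (\<lambda>c. lcomb c vs)"
proof -
  have "lcomb c vs \<in> lspan vs" for c
    unfolding lspan_def lcomb_eq_lincomb by auto
  then show ?thesis unfolding lspan_def lincomb_eq_lcomb by auto
qed

lemma lindep_free_iff_lcomb:
  "lindep_free vs \<longleftrightarrow> (\<forall>c. lcomb c vs = (\<lambda>_. 0) \<longrightarrow> (\<forall>i<length vs. c i = 0))"
proof
  assume free: "lindep_free vs"
  show "\<forall>c. lcomb c vs = (\<lambda>_. 0) \<longrightarrow> (\<forall>i<length vs. c i = 0)"
  proof (intro allI impI)
    fix c i assume "lcomb c vs = (\<lambda>_. 0)" "i < length vs"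
    then show "c i = 0"
      using free unfolding lindep_free_def lcomb_eq_lincomb
      by (metis (no_types, lifting) diff_zero length_map length_upt nth_map_upt add_0)
  qed
qed (auto simp: lindep_free_def lincomb_eq_lcomb)

lemma sum_lessThan_add: "(\<Sum>i<n + m. f i) = (\<Sum>i<n. f i) + (\<Sum>i<m. f ((n::nat) + i))"
  by (induction m) (auto simp: add.assoc)

lemma lcomb_append:
  "lcomb c (vs @ ws) = (\<lambda>s. lcomb c vs s + lcomb (\<lambda>i. c (length vs + i)) ws s)"
  unfolding lcomb_def by (auto simp: sum_lessThan_add nth_append intro!: ext sum.cong)

lemma lcomb_snoc: "lcomb c (vs @ [v]) = (\<lambda>s. lcomb c vs s + c (length vs) * v s)"
  unfolding lcomb_append by (simp add: lcomb_def)

lemma lcomb_combination: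
  "lcomb (\<lambda>i. a * c i + b * d i) vs = (\<lambda>s. a * lcomb c vs s + b * lcomb d vs s)"
  unfolding lcomb_def by (auto simp: sum_distrib_left sum.distrib algebra_simps)

lemma lcomb_Nil [simp]: "lcomb c [] = (\<lambda>_. 0)"
  by (simp add: lcomb_def)

lemma lcomb_unit:
  assumes "j < length vs"
  shows "lcomb (\<lambda>i. if i = j then 1 else 0) vs = vs ! j"
proof -
  have "lcomb (\<lambda>i. if i = j then 1 else 0) vs = (\<lambda>s. \<Sum>i<length vs. if i = j then (vs ! i) s else 0)"
    unfolding lcomb_def by (intro ext sum.cong) auto
  then show ?thesis using assms by simp
qed

lemma sum_lcomb:
  "finite I \<Longrightarrow> (\<lambda>s. \<Sum>l\<in>I. a l * lcomb (c l) vs s) = lcomb (\<lambda>i. \<Sum>l\<in>I. a l * c l i) vs"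
  unfolding lcomb_def
  by (auto simp: sum_distrib_left sum_distrib_right algebra_simps intro!: ext sum.swap[THEN trans] sum.cong)

lemma qlinearD: "qlinear f \<Longrightarrow> f (\<lambda>s. a * u s + b * v s) = (\<lambda>s. a * f u s + b * f v s)"
  by (simp add: qlinear_def)

lemma qlinear_zero: "qlinear f \<Longrightarrow> f (\<lambda>_. 0) = (\<lambda>_. 0)"
  using qlinearD[of f 0 "\<lambda>_. 0" 0 "\<lambda>_. 0"] by simp

lemma qlinear_id: "qlinear (\<lambda>x. x)"
  by (simp add: qlinear_def)

lemma qlinear_sum:
  assumes "qlinear f" "finite I"
  shows "f (\<lambda>s. \<Sum>l\<in>I. a l * u l s) = (\<lambda>s. \<Sum>l\<in>I. a l * f (u l) s)"
  using assms(2)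
proof (induction I)
  case empty
  then show ?case using qlinear_zero[OF assms(1)] by simp
next
  case (insert x F)
  have "f (\<lambda>s. \<Sum>l\<in>insert x F. a l * u l s) = f (\<lambda>s. a x * u x s + 1 * (\<Sum>l\<in>F. a l * u l s))"
    using insert by simp
  also have "\<dots> = (\<lambda>s. a x * f (u x) s + 1 * f (\<lambda>s. \<Sum>l\<in>F. a l * u l s) s)"
    by (rule qlinearD[OF assms(1)])
  finally show ?case using insert by simp
qed

lemma qlinear_lcomb: "qlinear f \<Longrightarrow> f (lcomb c vs) = lcomb c (map f vs)"
  unfolding lcomb_def using qlinear_sum[of f "{..<length vs}" c "\<lambda>i. vs ! i"] by simp

lemma qsubspaceD: "qsubspace W \<Longrightarrow> u \<in> W \<Longrightarrow> v \<in> W \<Longrightarrow> (\<lambda>s. a * u s + b * v s) \<in> W"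
  by (simp add: qsubspace_def)

lemma qsubspace_lcomb: "qsubspace W \<Longrightarrow> set vs \<subseteq> W \<Longrightarrow> lcomb c vs \<in> W"
proof (induction vs rule: rev_induct)
  case Nil
  then show ?case by (simp add: qsubspace_def)
next
  case (snoc v vs)
  then have "(\<lambda>s. 1 * lcomb c vs s + c (length vs) * v s) \<in> W"
    by (intro qsubspaceD) auto
  then show ?case by (simp add: lcomb_snoc)
qed

lemma qsubspace_kernel: "qsubspace C \<Longrightarrow> qlinear g \<Longrightarrow> qsubspace {c \<in> C. g c = (\<lambda>_. 0)}"
  unfolding qsubspace_def by (auto simp: qlinear_zero qlinearD)

lemma qsubspace_image:
  assumes C: "qsubspace C" and g: "qlinear g"
  shows "qsubspace (g ` C)"
proof -
  have "(\<lambda>s. a * g x s + b * g y s) \<in> g ` C" if "x \<in> C" "y \<in> C" for x y a b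
    using qlinearD[OF g, of a x b y] qsubspaceD[OF C that] by (metis image_eqI)
  moreover have "(\<lambda>_. 0) \<in> g ` C"
    using C qlinear_zero[OF g] by (auto simp: qsubspace_def intro!: rev_image_eqI)
  ultimately show ?thesis unfolding qsubspace_def by blast
qed

lemma qsubspace_supported: "qsubspace {c. supported c S}"
  unfolding qsubspace_def supported_def by (auto, metis add_0 mult_zero_right)

lemma is_basis_mem_iff: "is_basis W vs \<Longrightarrow> v \<in> W \<longleftrightarrow> (\<exists>c. v = lcomb c vs)"
  unfolding is_basis_def lspan_eq_range_lcomb by auto

lemma is_basis_lcomb: "is_basis W vs \<Longrightarrow> lcomb c vs \<in> W"
  using is_basis_mem_iff by blast

lemma is_basis_nth: "is_basis W vs \<Longrightarrow> j < length vs \<Longrightarrow> vs ! j \<in> W"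
  using lcomb_unit is_basis_lcomb by metis

lemma is_basis_set: "is_basis W vs \<Longrightarrow> set vs \<subseteq> W"
  by (auto simp: in_set_conv_nth dest: is_basis_nth)

lemma is_basis_Nil: "is_basis {\<lambda>_. 0} []"
  by (simp add: is_basis_def lspan_eq_range_lcomb lindep_free_iff_lcomb)

lemma is_basis_lcomb_unique:
  assumes "is_basis W vs" "lcomb c vs = lcomb d vs" "i < length vs"
  shows "c i = d i"
proof -
  have "lcomb (\<lambda>i. 1 * c i + (-1) * d i) vs = (\<lambda>_. 0)"
    unfolding lcomb_combination using assms(2) by simp
  then show ?thesis
    using assms(1,3) unfolding is_basis_def lindep_free_iff_lcomb by fastforce
qed

lemma coordinate_lcomb:
  assumes "is_basis W vs" "i < length vs"
  shows "coordinate vs (lcomb c vs) i = c i"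
proof -
  let ?cs = "map c [0..<length vs]"
  have "coord vs (lcomb c vs) = ?cs"
    unfolding coord_def
  proof (rule the_equality)
    show "length ?cs = length vs \<and> lincomb ?cs vs = lcomb c vs"
      by (simp add: lcomb_eq_lincomb)
    show "cs = ?cs" if "length cs = length vs \<and> lincomb cs vs = lcomb c vs" for cs
      using that is_basis_lcomb_unique[OF assms(1)] unfolding lincomb_eq_lcomb
      by (intro nth_equalityI) auto
  qed
  then show ?thesis using assms(2) by (simp add: coordinate_def)
qed

lemma lcomb_coordinate: "is_basis W vs \<Longrightarrow> v \<in> W \<Longrightarrow> v = lcomb (coordinate vs v) vs"
  by (metis is_basis_mem_iff coordinate_lcomb lcomb_cong)

lemma coordinate_nth:
  "is_basis W vs \<Longrightarrow> i < length vs \<Longrightarrow> j < length vs \<Longrightarrow>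
     coordinate vs (vs ! j) i = (if i = j then 1 else 0)"
  using coordinate_lcomb[of W vs i "\<lambda>i. if i = j then 1 else 0"] lcomb_unit by metis

lemma coordinate_sum:
  assumes B: "is_basis W vs" and I: "finite I" and u: "\<And>l. l \<in> I \<Longrightarrow> u l \<in> W"
    and j: "j < length vs"
  shows "coordinate vs (\<lambda>s. \<Sum>l\<in>I. a l * u l s) j = (\<Sum>l\<in>I. a l * coordinate vs (u l) j)"
proof -
  have "(\<lambda>s. \<Sum>l\<in>I. a l * u l s) = (\<lambda>s. \<Sum>l\<in>I. a l * lcomb (coordinate vs (u l)) vs s)"
    using lcomb_coordinate[OF B u] by (auto intro!: ext sum.cong)
  also have "\<dots> = lcomb (\<lambda>i. \<Sum>l\<in>I. a l * coordinate vs (u l) i) vs"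
    by (rule sum_lcomb[OF I])
  finally show ?thesis using coordinate_lcomb[OF B j] by simp
qed

lemma coordinate_append_left:
  assumes Z: "is_basis Z zs" and C: "is_basis C (zs @ cs)" and v: "v \<in> Z"
    and j: "j < length zs"
  shows "coordinate (zs @ cs) v j = coordinate zs v j"
proof -
  obtain d where d: "v = lcomb d zs" using v Z is_basis_mem_iff by blast
  have "lcomb d zs = lcomb (\<lambda>i. if i < length zs then d i else 0) (zs @ cs)"
    unfolding lcomb_append by (auto simp: lcomb_def)
  then have "coordinate (zs @ cs) v j = d j" using d coordinate_lcomb[OF C, of j] j by simp
  then show ?thesis using d coordinate_lcomb[OF Z j] by simp
qed

lemma fun_sum_apply: "sum f A x = (\<Sum>a\<in>A. f a x)"
  by (induction A rule: infinite_finite_induct) auto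

lemma sum_nth_distinct: "distinct vs \<Longrightarrow> (\<Sum>k<length vs. g (vs ! k)) = sum g (set vs)"
  by (simp add: sum_list_distinct_conv_sum_set[symmetric] sum_list_sum_nth atLeast0LessThan
      flip: map_nth)

lemma lindep_free_distinct:
  assumes free: "lindep_free vs"
  shows "distinct vs"
proof (rule ccontr)
  assume "\<not> distinct vs"
  then obtain i j where ij: "i < length vs" "j < length vs" "i \<noteq> j" "vs ! i = vs ! j"
    by (auto simp: distinct_conv_nth)
  let ?c = "\<lambda>k. 1 * (if k = i then 1 else 0) + (-1) * (if k = j then 1 else 0) :: rat"
  have "lcomb ?c vs = (\<lambda>_. 0)"
    unfolding lcomb_combination using lcomb_unit[OF ij(1)] lcomb_unit[OF ij(2)] ij(4) by simp
  then have "?c i = 0" using free ij unfolding lindep_free_iff_lcomb by blast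
  then show False using ij by simp
qed

lemma vector_space_fun: "vector_space (\<lambda>(c::rat) (f::'s \<Rightarrow> rat) x. c * f x)"
  by unfold_locales (auto simp: fun_eq_iff algebra_simps)

lemma lindep_free_independent:
  assumes free: "lindep_free vs"
  shows "\<not> module.dependent (\<lambda>(c::rat) (f::'s \<Rightarrow> rat) x. c * f x) (set vs)"
proof -
  interpret V: vector_space "\<lambda>(c::rat) (f::'s \<Rightarrow> rat) x. c * f x" by (rule vector_space_fun)
  have D: "distinct vs" by (rule lindep_free_distinct[OF free])
  show ?thesis
    unfolding V.independent_explicit_module
  proof (intro allI impI)
    fix t u v
    assume t: "finite t" "t \<subseteq> set vs" and z: "(\<Sum>v\<in>t. (\<lambda>x. u v * v x)) = 0" and v: "v \<in> t"
    let ?c = "\<lambda>k. if vs ! k \<in> t then u (vs ! k) else 0"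
    have "lcomb ?c vs = (\<lambda>x. \<Sum>w\<in>set vs. if w \<in> t then u w * w x else 0)"
      unfolding lcomb_def by (auto simp: sum_nth_distinct[OF D, symmetric] intro!: sum.cong)
    also have "\<dots> = (\<lambda>x. \<Sum>w\<in>t. u w * w x)"
      using t by (simp add: sum.If_cases Int_absorb1)
    also have "\<dots> = (\<lambda>_. 0)" using z by (auto simp: fun_eq_iff fun_sum_apply)
    finally have "\<forall>k<length vs. ?c k = 0" using free unfolding lindep_free_iff_lcomb by blast
    moreover obtain k where "k < length vs" "vs ! k = v"
      using t(2) v by (metis in_set_conv_nth subsetD)
    ultimately show "u v = 0" using v by force
  qed
qed

lemma lindep_free_length_le:
  assumes S: "finite S" and free: "lindep_free vs" and supp: "\<And>v. v \<in> set vs \<Longrightarrow> supported v S"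
  shows "length vs \<le> card S"
proof -
  interpret V: vector_space "\<lambda>(c::rat) (f::'s \<Rightarrow> rat) x. c * f x" by (rule vector_space_fun)
  let ?ind = "\<lambda>s. (\<lambda>x. if x = s then 1 else 0 :: rat)"
  have "set vs \<subseteq> V.span (?ind ` S)"
  proof
    fix v assume "v \<in> set vs"
    then have "v = (\<Sum>s\<in>S. (\<lambda>x. v s * ?ind s x))"
      using supp S by (auto simp: fun_eq_iff fun_sum_apply supported_def if_distrib cong: if_cong)
    also have "\<dots> \<in> V.span (?ind ` S)"
      by (intro V.span_sum V.span_scale V.span_base) auto
    finally show "v \<in> V.span (?ind ` S)" .
  qed
  then have "card (set vs) \<le> card (?ind ` S)"
    using V.independent_span_bound lindep_free_independent[OF free] S by blast
  also have "\<dots> \<le> card S" by (rule card_image_le[OF S])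
  finally show ?thesis using distinct_card[OF lindep_free_distinct[OF free]] by simp
qed

lemma lindep_free_snoc:
  assumes free: "lindep_free bs" and v: "v \<notin> lspan bs"
  shows "lindep_free (bs @ [v])"
  unfolding lindep_free_iff_lcomb
proof (intro allI impI)
  fix c i assume z: "lcomb c (bs @ [v]) = (\<lambda>_. 0)" and i: "i < length (bs @ [v])"
  have z': "\<And>s. lcomb c bs s + c (length bs) * v s = 0"
    using z by (simp add: lcomb_snoc fun_eq_iff)
  have last: "c (length bs) = 0"
  proof (rule ccontr)
    assume nz: "c (length bs) \<noteq> 0"
    have "v = lcomb (\<lambda>i. (- 1 / c (length bs)) * c i + 0 * c i) bs"
      unfolding lcomb_combination using z' nz by (auto simp: fun_eq_iff field_simps add_eq_0_iff)
    then show False using v by (auto simp: lspan_eq_range_lcomb)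
  qed
  then have "lcomb c bs = (\<lambda>_. 0)" using z' by (simp add: fun_eq_iff)
  then have "\<forall>i<length bs. c i = 0" using free unfolding lindep_free_iff_lcomb by blast
  then show "c i = 0" using i last by (auto simp: nth_append less_Suc_eq)
qed

lemma extend_to_basis:
  assumes S: "finite S" and Z: "qsubspace Z" and supp: "\<And>v. v \<in> Z \<Longrightarrow> supported v S"
  shows "lindep_free bs \<Longrightarrow> set bs \<subseteq> Z \<Longrightarrow> \<exists>cs. is_basis Z (bs @ cs)"
proof (induction "card S - length bs" arbitrary: bs rule: less_induct)
  case less
  show ?case
  proof (cases "lspan bs = Z")
    case True
    then show ?thesis using less by (auto simp: is_basis_def intro!: exI[of _ "[]"])
  next
    case False
    have "lspan bs \<subseteq> Z" using qsubspace_lcomb[OF Z less(3)] by (auto simp: lspan_eq_range_lcomb)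
    with False obtain v where v: "v \<in> Z" "v \<notin> lspan bs" by blast
    have free: "lindep_free (bs @ [v])" by (rule lindep_free_snoc[OF less(2) v(2)])
    have "length (bs @ [v]) \<le> card S"
      by (rule lindep_free_length_le[OF S free]) (use v less(3) supp in auto)
    then have "card S - length (bs @ [v]) < card S - length bs" by simp
    from less(1)[OF this free] v less(3) obtain cs where "is_basis Z ((bs @ [v]) @ cs)" by auto
    then show ?thesis by (intro exI[of _ "v # cs"]) simp
  qed
qed

lemma basis_exists:
  assumes "finite S" "qsubspace Z" "\<And>v. v \<in> Z \<Longrightarrow> supported v S"
  shows "\<exists>vs. is_basis Z vs"
  using extend_to_basis[OF assms, of "[]"] by (auto simp: lindep_free_def)

lemma adapted_basis_is_basis:
  assumes S: "finite S" and B: "qsubspace B" and Z: "qsubspace Z" and BZ: "B \<subseteq> Z"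
    and supp: "\<And>v. v \<in> Z \<Longrightarrow> supported v S"
  shows "is_basis B (fst (adapted_basis Z B)) \<and>
         is_basis Z (fst (adapted_basis Z B) @ snd (adapted_basis Z B))"
proof -
  obtain bs where bs: "is_basis B bs"
    using basis_exists[OF S B] supp BZ by blast
  then obtain cs where "is_basis Z (bs @ cs)"
    using extend_to_basis[OF S Z supp] is_basis_set[OF bs] BZ by (auto simp: is_basis_def)
  then have "\<exists>p. is_basis B (fst p) \<and> is_basis Z (fst p @ snd p)"
    using bs by (intro exI[of _ "(bs, cs)"]) simp
  then show ?thesis unfolding adapted_basis_def by (rule someI_ex)
qed

lemma basis_trace_invariant:
  assumes V: "is_basis W vs" and U: "is_basis W ws"
    and f: "qlinear f" "\<And>v. v \<in> W \<Longrightarrow> f v \<in> W"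
  shows "basis_trace vs f = basis_trace ws f"
proof -
  let ?n = "length vs" and ?m = "length ws"
  have fw: "f (ws ! l) \<in> W" if "l < ?m" for l using f(2) is_basis_nth[OF U that] .
  have "basis_trace vs f =
      (\<Sum>j<?n. coordinate vs (\<lambda>s. \<Sum>l<?m. coordinate ws (vs ! j) l * f (ws ! l) s) j)"
    unfolding basis_trace_def
  proof (rule sum.cong[OF refl])
    fix j assume "j \<in> {..<?n}"
    then have "vs ! j = lcomb (coordinate ws (vs ! j)) ws"
      using lcomb_coordinate[OF U is_basis_nth[OF V]] by simp
    then have "f (vs ! j) = lcomb (coordinate ws (vs ! j)) (map f ws)"
      using qlinear_lcomb[OF f(1)] by metis
    then show "coordinate vs (f (vs ! j)) j =
        coordinate vs (\<lambda>s. \<Sum>l<?m. coordinate ws (vs ! j) l * f (ws ! l) s) j"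
      by (simp add: lcomb_def)
  qed
  also have "\<dots> = (\<Sum>j<?n. \<Sum>l<?m. coordinate ws (vs ! j) l * coordinate vs (f (ws ! l)) j)"
    by (rule sum.cong[OF refl], rule coordinate_sum[OF V]) (auto intro: fw)
  also have "\<dots> = (\<Sum>l<?m. \<Sum>j<?n. coordinate vs (f (ws ! l)) j * coordinate ws (vs ! j) l)"
    by (subst sum.swap) (simp add: mult.commute)
  also have "\<dots> = (\<Sum>l<?m. coordinate ws (\<lambda>s. \<Sum>j<?n. coordinate vs (f (ws ! l)) j * (vs ! j) s) l)"
    by (rule sum.cong[OF refl], rule coordinate_sum[OF U, symmetric]) (auto intro: is_basis_nth[OF V])
  also have "\<dots> = (\<Sum>l<?m. coordinate ws (f (ws ! l)) l)"
    using lcomb_coordinate[OF V fw] by (auto intro!: sum.cong simp: lcomb_def)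
  finally show ?thesis by (simp add: basis_trace_def)
qed

lemma subspace_trace_eq:
  assumes "is_basis W vs" "qlinear f" "\<And>v. v \<in> W \<Longrightarrow> f v \<in> W"
  shows "subspace_trace W f = basis_trace vs f"
  unfolding subspace_trace_def
  using basis_trace_invariant[OF someI[of "is_basis W", OF assms(1)] assms] .

lemma basis_trace_id: "is_basis W vs \<Longrightarrow> basis_trace vs (\<lambda>x. x) = of_nat (length vs)"
  unfolding basis_trace_def by (simp add: coordinate_nth)

lemma basis_trace_append:
  assumes Z: "is_basis Z zs" and C: "is_basis C (zs @ cs)" and f: "\<And>v. v \<in> Z \<Longrightarrow> f v \<in> Z"
  shows "basis_trace (zs @ cs) f =
    basis_trace zs f + (\<Sum>j<length cs. coordinate (zs @ cs) (f (cs ! j)) (length zs + j))"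
proof -
  have "coordinate (zs @ cs) (f (zs ! j)) j = coordinate zs (f (zs ! j)) j" if "j < length zs" for j
    using coordinate_append_left[OF Z C f[OF is_basis_nth[OF Z]]] that by blast
  then show ?thesis
    by (simp add: basis_trace_def sum_lessThan_add nth_append)
qed

lemma quot_trace_eq_diff:
  assumes S: "finite S" and B: "qsubspace B" and Z: "qsubspace Z" and BZ: "B \<subseteq> Z"
    and supp: "\<And>v. v \<in> Z \<Longrightarrow> supported v S"
    and f: "qlinear f" "\<And>v. v \<in> Z \<Longrightarrow> f v \<in> Z" "\<And>v. v \<in> B \<Longrightarrow> f v \<in> B"
  shows "quot_trace Z B f = subspace_trace Z f - subspace_trace B f"
proof -
  note bases = adapted_basis_is_basis[OF S B Z BZ supp]
  show ?thesis
    using basis_trace_append[OF bases[THEN conjunct1] bases[THEN conjunct2] f(3)]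
      subspace_trace_eq[OF bases[THEN conjunct1] f(1,3)]
      subspace_trace_eq[OF bases[THEN conjunct2] f(1,2)]
    by (simp add: quot_trace_def Let_def coordinate_def)
qed

lemma quot_dim_eq_quot_trace:
  assumes "finite S" "qsubspace B" "qsubspace Z" "B \<subseteq> Z" "\<And>v. v \<in> Z \<Longrightarrow> supported v S"
  shows "of_nat (quot_dim Z B) = quot_trace Z B (\<lambda>x. x)"
proof -
  note bases = adapted_basis_is_basis[OF assms]
  show ?thesis
    using basis_trace_append[OF bases[THEN conjunct1] bases[THEN conjunct2], of "\<lambda>x. x"]
      basis_trace_id[OF bases[THEN conjunct1]] basis_trace_id[OF bases[THEN conjunct2]]
    by (simp add: quot_dim_def quot_trace_def Let_def coordinate_def)
qed

lemma kernel_complement_lcomb: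
  assumes Z: "is_basis {c \<in> C. g c = (\<lambda>_. 0)} zs" and C: "is_basis C (zs @ cs)"
    and g: "qlinear g" and c: "c \<in> C"
  shows "g c = lcomb (\<lambda>i. coordinate (zs @ cs) c (length zs + i)) (map g cs)"
proof -
  let ?d = "coordinate (zs @ cs) c"
  have c_eq: "c = (\<lambda>s. 1 * lcomb ?d zs s + 1 * lcomb (\<lambda>i. ?d (length zs + i)) cs s)"
    using lcomb_coordinate[OF C c] by (simp add: lcomb_append)
  have "g c = (\<lambda>s. 1 * g (lcomb ?d zs) s + 1 * g (lcomb (\<lambda>i. ?d (length zs + i)) cs) s)"
    by (subst c_eq, rule qlinearD[OF g])
  moreover have "g (lcomb ?d zs) = (\<lambda>_. 0)"
    using is_basis_lcomb[OF Z] by blast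
  ultimately show ?thesis using qlinear_lcomb[OF g] by simp
qed

lemma is_basis_image_complement:
  assumes Z: "is_basis {c \<in> C. g c = (\<lambda>_. 0)} zs" and C: "is_basis C (zs @ cs)"
    and g: "qlinear g"
  shows "is_basis (g ` C) (map g cs)"
proof -
  let ?n = "length zs"
  have shift: "lcomb a cs = lcomb (\<lambda>i. if i < ?n then 0 else a (i - ?n)) (zs @ cs)" for a
    unfolding lcomb_append by (auto simp: lcomb_def)
  have cs_C: "lcomb a cs \<in> C" for a
    by (simp only: shift[of a] is_basis_lcomb[OF C])
  have "lindep_free (map g cs)"
    unfolding lindep_free_iff_lcomb
  proof (intro allI impI)
    fix a i assume z: "lcomb a (map g cs) = (\<lambda>_. 0)" and i: "i < length (map g cs)"
    have "g (lcomb a cs) = (\<lambda>_. 0)" using z qlinear_lcomb[OF g, of a cs] by simp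
    then have "lcomb a cs \<in> {c \<in> C. g c = (\<lambda>_. 0)}" using cs_C by simp
    then obtain b where b: "lcomb a cs = lcomb b zs" using is_basis_mem_iff[OF Z] by blast
    define d where "d = (\<lambda>i. 1 * (if i < ?n then b i else 0) + (-1) * (if i < ?n then 0 else a (i - ?n)))"
    have "lcomb d (zs @ cs) = lcomb (\<lambda>_. 0) (zs @ cs)"
      unfolding d_def lcomb_combination using shift[of a] b
      by (simp add: lcomb_append) (simp add: lcomb_def)
    then have "d (?n + i) = 0"
      using is_basis_lcomb_unique[OF C, of d "\<lambda>_. 0" "?n + i"] i by simp
    then show "a i = 0" by (simp add: d_def)
  qed
  moreover have "lspan (map g cs) = g ` C"
  proof
    show "lspan (map g cs) \<subseteq> g ` C"
      unfolding lspan_eq_range_lcomb using qlinear_lcomb[OF g] cs_C by (auto intro!: image_eqI)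
    show "g ` C \<subseteq> lspan (map g cs)"
      unfolding lspan_eq_range_lcomb using kernel_complement_lcomb[OF Z C g] by blast
  qed
  ultimately show ?thesis by (simp add: is_basis_def)
qed

lemma subspace_trace_kernel_image:
  assumes S: "finite S" and C: "qsubspace C" and supp: "\<And>v. v \<in> C \<Longrightarrow> supported v S"
    and g: "qlinear g" and f: "qlinear f" "\<And>c. c \<in> C \<Longrightarrow> f c \<in> C"
    and f': "qlinear f'" and comm: "\<And>c. c \<in> C \<Longrightarrow> g (f c) = f' (g c)"
  shows "subspace_trace C f = subspace_trace {c \<in> C. g c = (\<lambda>_. 0)} f + subspace_trace (g ` C) f'"
proof -
  let ?Z = "{c \<in> C. g c = (\<lambda>_. 0)}"
  have f_Z: "f c \<in> ?Z" if "c \<in> ?Z" for c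
    using comm qlinear_zero[OF f'] f(2) that by auto
  have f'_img: "f' v \<in> g ` C" if "v \<in> g ` C" for v
  proof -
    obtain c where "c \<in> C" "v = g c" using \<open>v \<in> g ` C\<close> by blast
    then have "f' v = g (f c)" using comm by simp
    then show ?thesis using f(2) \<open>c \<in> C\<close> by blast
  qed
  obtain zs where zs: "is_basis ?Z zs"
    using basis_exists[OF S qsubspace_kernel[OF C g]] supp by auto
  have "set zs \<subseteq> C" using is_basis_set[OF zs] by auto
  moreover have "lindep_free zs" using zs by (simp add: is_basis_def)
  ultimately obtain cs where cs: "is_basis C (zs @ cs)"
    using extend_to_basis[OF S C supp] by blast
  note img = is_basis_image_complement[OF zs cs g]
  have "coordinate (zs @ cs) (f (cs ! j)) (length zs + j) = coordinate (map g cs) (f' (map g cs ! j)) j"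
    if j: "j < length cs" for j
  proof -
    have cj: "cs ! j \<in> C" using is_basis_nth[OF cs, of "length zs + j"] j by (simp add: nth_append)
    then have "f' (map g cs ! j) = lcomb (\<lambda>i. coordinate (zs @ cs) (f (cs ! j)) (length zs + i)) (map g cs)"
      using comm kernel_complement_lcomb[OF zs cs g f(2)] j by simp
    then show ?thesis using coordinate_lcomb[OF img, of j] j by simp
  qed
  then have "basis_trace (zs @ cs) f = basis_trace zs f + basis_trace (map g cs) f'"
    using basis_trace_append[OF zs cs, of f] f_Z by (simp add: basis_trace_def)
  then show ?thesis
    using subspace_trace_eq[OF cs f] subspace_trace_eq[OF zs f(1) f_Z]
      subspace_trace_eq[OF img f' f'_img] by simp
qed

lemma is_basis_indicators:
  assumes ss: "distinct ss"
  shows "is_basis {c. supported c (set ss)} (map (\<lambda>s t. if t = s then 1 else 0) ss)"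
    and "supported v (set ss) \<Longrightarrow> i < length ss \<Longrightarrow>
           coordinate (map (\<lambda>s t. if t = s then 1 else 0) ss) v i = v (ss ! i)"
proof -
  let ?es = "map (\<lambda>s t. if t = s then 1 else 0 :: rat) ss"
  have at: "lcomb c ?es (ss ! i) = c i" if i: "i < length ss" for c i
  proof -
    have "lcomb c ?es (ss ! i) = (\<Sum>l<length ss. if l = i then c l else 0)"
      unfolding lcomb_def using ss i by (intro sum.cong refl) (auto simp: nth_eq_iff_index_eq)
    then show ?thesis using i by simp
  qed
  have out: "lcomb c ?es t = 0" if "t \<notin> set ss" for c t
    unfolding lcomb_def using that by (auto intro!: sum.neutral)
  have repr: "v = lcomb (\<lambda>i. v (ss ! i)) ?es" if v: "supported v (set ss)" for v
  proof
    fix t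
    show "v t = lcomb (\<lambda>i. v (ss ! i)) ?es t"
      using at out v by (cases "t \<in> set ss") (auto simp: in_set_conv_nth supported_def)
  qed
  have "lindep_free ?es"
    unfolding lindep_free_iff_lcomb using at by (metis length_map)
  moreover have "lspan ?es = {c. supported c (set ss)}"
    unfolding lspan_eq_range_lcomb using out repr by (auto simp: supported_def)
  ultimately show B: "is_basis {c. supported c (set ss)} ?es"
    by (simp add: is_basis_def)
  show "coordinate ?es v i = v (ss ! i)" if "supported v (set ss)" "i < length ss"
    using coordinate_lcomb[OF B, of i] repr[OF that(1)] that(2) by (metis length_map)
qed

lemma subspace_trace_supported:
  assumes S: "finite S" and f: "qlinear f" "\<And>c. supported c S \<Longrightarrow> supported (f c) S"
  shows "subspace_trace {c. supported c S} f = (\<Sum>s\<in>S. f (\<lambda>t. if t = s then 1 else 0) s)"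
proof -
  obtain ss where ss: "set ss = S" "distinct ss" using finite_distinct_list[OF S] by blast
  let ?e = "\<lambda>s t. if t = s then 1 else 0 :: rat"
  note B = is_basis_indicators[OF ss(2), unfolded ss(1)]
  have "coordinate (map ?e ss) (f (?e (ss ! i))) i = f (?e (ss ! i)) (ss ! i)" if "i < length ss" for i
  proof -
    have "ss ! i \<in> S" using that ss(1) by auto
    then have "supported (f (?e (ss ! i))) S"
      by (intro f(2)) (simp add: supported_def)
    then show ?thesis using B(2) that ss(1) by simp
  qed
  then have "subspace_trace {c. supported c S} f = (\<Sum>i<length ss. f (?e (ss ! i)) (ss ! i))"
    using subspace_trace_eq[OF B(1) f(1)] f(2) by (simp add: basis_trace_def)
  also have "\<dots> = (\<Sum>s\<in>S. f (?e s) s)"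
    using sum_nth_distinct[OF ss(2), of "\<lambda>s. f (?e s) s"] ss(1) by simp
  finally show ?thesis .
qed

section \<open>The Hopf trace formula for the nerve\<close>

lemma qlinear_bd: "qlinear (bd D k)"
  unfolding qlinear_def bd_def
  by (auto simp: fun_eq_iff sum.distrib sum_distrib_left algebra_simps)

lemma qsubspace_chains: "qsubspace (chains D k)"
  unfolding chains_def by (rule qsubspace_supported)

lemma cycles_0: "cycles D 0 = chains D 0"
  by (auto simp: cycles_def bd_def)

locale nerve_chain_map =
  fixes D :: "('o, 'm) cat" and f :: "nat \<Rightarrow> ('o \<times> 'm list \<Rightarrow> rat) \<Rightarrow> ('o \<times> 'm list \<Rightarrow> rat)"
  assumes finite_Simp: "\<And>k. finite (Simp D k)"
    and bd_chains: "\<And>k c. c \<in> chains D (Suc k) \<Longrightarrow> bd D (Suc k) c \<in> chains D k"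
    and bd_bd: "\<And>k c. c \<in> chains D (Suc (Suc k)) \<Longrightarrow> bd D (Suc k) (bd D (Suc (Suc k)) c) = (\<lambda>_. 0)"
    and f_qlinear: "\<And>k. qlinear (f k)"
    and f_chains: "\<And>k c. c \<in> chains D k \<Longrightarrow> f k c \<in> chains D k"
    and bd_commute: "\<And>k c. c \<in> chains D (Suc k) \<Longrightarrow> bd D (Suc k) (f (Suc k) c) = f k (bd D (Suc k) c)"
begin

lemma qsubspace_cycles: "qsubspace (cycles D k)"
  unfolding cycles_def by (rule qsubspace_kernel[OF qsubspace_chains qlinear_bd])

lemma qsubspace_boundaries: "qsubspace (boundaries D k)"
  unfolding boundaries_def by (rule qsubspace_image[OF qsubspace_chains qlinear_bd])

lemma supported_cycles: "c \<in> cycles D k \<Longrightarrow> supported c (Simp D k)"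
  by (simp add: cycles_def chains_def)

lemma boundaries_subset_cycles: "boundaries D k \<subseteq> cycles D k"
proof
  fix b assume "b \<in> boundaries D k"
  then obtain c where c: "c \<in> chains D (Suc k)" "b = bd D (Suc k) c"
    by (auto simp: boundaries_def)
  have "bd D k b = (\<lambda>_. 0)"
  proof (cases k)
    case 0
    then show ?thesis by (simp add: bd_def)
  next
    case (Suc k')
    then show ?thesis using bd_bd c by simp
  qed
  then show "b \<in> cycles D k" using bd_chains c by (simp add: cycles_def)
qed

lemma f_cycles:
  assumes c: "c \<in> cycles D k"
  shows "f k c \<in> cycles D k"
proof -
  have "bd D k (f k c) = (\<lambda>_. 0)"
  proof (cases k)
    case 0
    then show ?thesis by (simp add: bd_def)
  next
    case (Suc k')
    then show ?thesis using bd_commute[of c k'] c qlinear_zero[OF f_qlinear] by (simp add: cycles_def)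
  qed
  then show ?thesis using f_chains c by (simp add: cycles_def)
qed

lemma f_boundaries: "c \<in> boundaries D k \<Longrightarrow> f k c \<in> boundaries D k"
  unfolding boundaries_def using bd_commute f_chains by (auto simp flip: bd_commute)

lemma quot_trace_homology:
  "quot_trace (cycles D k) (boundaries D k) (f k) =
     subspace_trace (cycles D k) (f k) - subspace_trace (boundaries D k) (f k)"
  by (rule quot_trace_eq_diff[OF finite_Simp qsubspace_boundaries qsubspace_cycles
        boundaries_subset_cycles supported_cycles f_qlinear f_cycles f_boundaries])

lemma subspace_trace_chains_Suc:
  "subspace_trace (chains D (Suc k)) (f (Suc k)) =
     subspace_trace (cycles D (Suc k)) (f (Suc k)) + subspace_trace (boundaries D k) (f k)"
proof -
  have "\<And>v. v \<in> chains D (Suc k) \<Longrightarrow> supported v (Simp D (Suc k))"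
    by (simp add: chains_def)
  from subspace_trace_kernel_image[of "Simp D (Suc k)" "chains D (Suc k)" "bd D (Suc k)" "f (Suc k)"
      "f k", OF finite_Simp qsubspace_chains this qlinear_bd f_qlinear f_chains f_qlinear bd_commute]
  show ?thesis by (simp add: cycles_def boundaries_def)
qed

lemma alternating_homology_trace_remainder:
  "(\<Sum>i\<le>N. (-1) ^ i * quot_trace (cycles D i) (boundaries D i) (f i)) =
   (\<Sum>i\<le>N. (-1) ^ i * subspace_trace (chains D i) (f i))
     - (-1) ^ N * subspace_trace (boundaries D N) (f N)"
proof (induction N)
  case 0
  then show ?case using quot_trace_homology[of 0] by (simp add: cycles_0)
next
  case (Suc N)
  have telescope: "A + (-x) * q = X + (-x) * c - (-x) * b'"
    if "A = X - x * b" "q = c - b - b'" for A X x q c b b' :: rat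
    unfolding that by (simp add: algebra_simps)
  have "quot_trace (cycles D (Suc N)) (boundaries D (Suc N)) (f (Suc N)) =
      subspace_trace (chains D (Suc N)) (f (Suc N)) - subspace_trace (boundaries D N) (f N)
        - subspace_trace (boundaries D (Suc N)) (f (Suc N))"
    using quot_trace_homology[of "Suc N"] subspace_trace_chains_Suc[of N] by simp
  from telescope[OF Suc.IH this] show ?case
    by (simp del: sum.atMost_Suc add: sum.atMost_Suc[of _ N])
qed

theorem hopf_trace_formula:
  assumes "Simp D (Suc N) = {}"
  shows "(\<Sum>i\<le>N. (-1) ^ i * quot_trace (cycles D i) (boundaries D i) (f i)) =
         (\<Sum>i\<le>N. (-1) ^ i * subspace_trace (chains D i) (f i))"
proof -
  have "chains D (Suc N) = {\<lambda>_. 0}"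
    using assms by (auto simp: chains_def supported_def)
  then have "boundaries D N = {\<lambda>_. 0}"
    using qlinear_zero[OF qlinear_bd] by (simp add: boundaries_def)
  then have "subspace_trace (boundaries D N) (f N) = 0"
    using subspace_trace_eq[OF is_basis_Nil f_qlinear] qlinear_zero[OF f_qlinear]
    by (simp add: basis_trace_def)
  then show ?thesis using alternating_homology_trace_remainder[of N] by simp
qed

lemma quot_dim_homology:
  "of_nat (quot_dim (cycles D k) (boundaries D k)) = quot_trace (cycles D k) (boundaries D k) (\<lambda>x. x)"
  by (rule quot_dim_eq_quot_trace[OF finite_Simp qsubspace_boundaries qsubspace_cycles
        boundaries_subset_cycles supported_cycles])

lemma trace_chains_eq_sum:
  "subspace_trace (chains D k) (f k) = (\<Sum>s\<in>Simp D k. f k (\<lambda>t. if t = s then 1 else 0) s)"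
  using subspace_trace_supported[OF finite_Simp f_qlinear, of k k] f_chains
  by (simp add: chains_def)

end

section \<open>Acyclic categories and their nerves\<close>

lemma Simp_iff:
  "(x, ms) \<in> Simp D k \<longleftrightarrow> length ms = k \<and> (k = 0 \<longrightarrow> x \<in> Ob D) \<and> (0 < k \<longrightarrow> x = Dm D (ms ! 0)) \<and>
     (\<forall>p<k. ms ! p \<in> Mor D \<and> \<not> is_identity D (ms ! p)) \<and>
     (\<forall>p. Suc p < k \<longrightarrow> Cd D (ms ! p) = Dm D (ms ! Suc p))"
proof -
  have "set ms \<subseteq> Mor D \<longleftrightarrow> (\<forall>p<length ms. ms ! p \<in> Mor D)"
    by (auto simp: in_set_conv_nth) (meson nth_mem subsetD)
  then show ?thesis unfolding Simp_def
    by (simp only: all_set_conv_all_nth mem_Collect_eq prod.case) (auto simp: hd_conv_nth)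
qed

locale acyclic_category =
  fixes D :: "('o, 'm) cat"
  assumes acyclic: "acyclic_cat D"
begin

lemma category: "is_category D"
  using acyclic by (simp add: acyclic_cat_def)

lemma Dm_in_Ob: "a \<in> Mor D \<Longrightarrow> Dm D a \<in> Ob D"
  and Cd_in_Ob: "a \<in> Mor D \<Longrightarrow> Cd D a \<in> Ob D"
  and Idt_in_Mor: "x \<in> Ob D \<Longrightarrow> Idt D x \<in> Mor D"
  and Dm_Idt: "x \<in> Ob D \<Longrightarrow> Dm D (Idt D x) = x"
  and Cd_Idt: "x \<in> Ob D \<Longrightarrow> Cd D (Idt D x) = x"
  and Cmp_in_Mor: "a \<in> Mor D \<Longrightarrow> b \<in> Mor D \<Longrightarrow> Cd D a = Dm D b \<Longrightarrow> Cmp D b a \<in> Mor D"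
  and Dm_Cmp: "a \<in> Mor D \<Longrightarrow> b \<in> Mor D \<Longrightarrow> Cd D a = Dm D b \<Longrightarrow> Dm D (Cmp D b a) = Dm D a"
  and Cd_Cmp: "a \<in> Mor D \<Longrightarrow> b \<in> Mor D \<Longrightarrow> Cd D a = Dm D b \<Longrightarrow> Cd D (Cmp D b a) = Cd D b"
  and Cmp_Idt_left: "a \<in> Mor D \<Longrightarrow> Cmp D (Idt D (Cd D a)) a = a"
  and Cmp_Idt_right: "a \<in> Mor D \<Longrightarrow> Cmp D a (Idt D (Dm D a)) = a"
  using category by (simp_all add: is_category_def)

lemma Cmp_assoc:
  "a \<in> Mor D \<Longrightarrow> b \<in> Mor D \<Longrightarrow> c \<in> Mor D \<Longrightarrow> Cd D a = Dm D b \<Longrightarrow> Cd D b = Dm D c \<Longrightarrow>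
    Cmp D c (Cmp D b a) = Cmp D (Cmp D c b) a"
  using category unfolding is_category_def by blast

lemma endomorphism_is_identity: "a \<in> Mor D \<Longrightarrow> Dm D a = Cd D a \<Longrightarrow> is_identity D a"
  using acyclic by (simp add: acyclic_cat_def)

text \<open>If b \<circ> a were an identity, then so would be the endomorphism a \<circ> b, making a invertible.\<close>

lemma Cmp_non_identity:
  assumes a: "a \<in> Mor D" and b: "b \<in> Mor D" and ab: "Cd D a = Dm D b"
    and a_nonid: "\<not> is_identity D a"
  shows "\<not> is_identity D (Cmp D b a)"
proof
  assume "is_identity D (Cmp D b a)"
  then have ba_id: "Cmp D b a = Idt D (Dm D a)"
    using Dm_Cmp[OF a b ab] by (simp add: is_identity_def)
  then have ba: "Cd D b = Dm D a"
    using Cd_Cmp[OF a b ab] Cd_Idt[OF Dm_in_Ob[OF a]] by simp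
  have "is_identity D (Cmp D a b)"
    using endomorphism_is_identity[OF Cmp_in_Mor[OF b a ba]] Dm_Cmp[OF b a ba] Cd_Cmp[OF b a ba] ab
    by simp
  then have ab_id: "Cmp D a b = Idt D (Cd D a)"
    using Dm_Cmp[OF b a ba] ab by (simp add: is_identity_def)
  have invertible_is_identity: "\<forall>a\<in>Mor D. (\<exists>b\<in>Mor D. Dm D b = Cd D a \<and> Cd D b = Dm D a \<and>
         Cmp D b a = Idt D (Dm D a) \<and> Cmp D a b = Idt D (Cd D a)) \<longrightarrow> is_identity D a"
    using acyclic unfolding acyclic_cat_def by blast
  have "is_identity D a"
    by (rule invertible_is_identity[rule_format, OF a], rule bexI[of _ b])
      (use ab ba ba_id ab_id b in auto)
  then show False using a_nonid by simp
qed

lemma reach_refl: "x \<in> Ob D \<Longrightarrow> reach D x x"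
  unfolding reach_def using Idt_in_Mor Dm_Idt Cd_Idt by blast

lemma reach_trans: "reach D x y \<Longrightarrow> reach D y z \<Longrightarrow> reach D x z"
  unfolding reach_def using Cmp_in_Mor Dm_Cmp Cd_Cmp by metis

lemma reach_antisym: "reach D x y \<Longrightarrow> reach D y x \<Longrightarrow> x = y"
proof -
  assume "reach D x y" "reach D y x"
  then obtain a b where a: "a \<in> Mor D" "Dm D a = x" "Cd D a = y"
    and b: "b \<in> Mor D" "Dm D b = y" "Cd D b = x"
    unfolding reach_def by blast
  have ab: "Cd D a = Dm D b" using a b by simp
  have "is_identity D (Cmp D b a)"
    using endomorphism_is_identity[OF Cmp_in_Mor[OF a(1) b(1) ab]] Dm_Cmp[OF a(1) b(1) ab]
      Cd_Cmp[OF a(1) b(1) ab] a b by simp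
  then have "a = Idt D (Dm D a)"
    using Cmp_non_identity[OF a(1) b(1) ab] by (auto simp: is_identity_def)
  then show "x = y" using a Cd_Idt[OF Dm_in_Ob[OF a(1)]] by metis
qed

lemma finite_Ob: "finite (Mor D) \<Longrightarrow> finite (Ob D)"
proof -
  assume "finite (Mor D)"
  moreover have "Ob D \<subseteq> Dm D ` Mor D"
    using Dm_Idt Idt_in_Mor by (auto intro!: rev_image_eqI)
  ultimately show ?thesis using finite_surj by blast
qed

lemma card_Ob_le_card_Mor: "finite (Mor D) \<Longrightarrow> card (Ob D) \<le> card (Mor D)"
proof -
  assume "finite (Mor D)"
  moreover have "inj_on (Idt D) (Ob D)" using Dm_Idt by (metis inj_onI)
  ultimately show ?thesis using card_inj_on_le[of "Idt D" "Ob D" "Mor D"] Idt_in_Mor by auto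
qed

lemma Simp_fst_in_Ob: "(x, ms) \<in> Simp D k \<Longrightarrow> x \<in> Ob D"
  using Dm_in_Ob by (cases k) (auto simp: Simp_iff)

lemma finite_Simp: "finite (Mor D) \<Longrightarrow> finite (Simp D k)"
proof -
  assume fin: "finite (Mor D)"
  have "Simp D k \<subseteq> Ob D \<times> {ms. set ms \<subseteq> Mor D \<and> length ms = k}"
    using Simp_fst_in_Ob by (auto simp: Simp_def)
  moreover have "finite (Ob D \<times> {ms. set ms \<subseteq> Mor D \<and> length ms = k})"
    using finite_Ob[OF fin] fin by (simp add: finite_lists_length_eq)
  ultimately show ?thesis using finite_subset by blast
qed

lemma vert_in_Ob: "(x, ms) \<in> Simp D k \<Longrightarrow> j \<le> k \<Longrightarrow> vert D (x, ms) j \<in> Ob D"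
  by (cases j) (auto simp: vert_def Simp_iff intro: Cd_in_Ob Dm_in_Ob)

lemma Simp_path:
  assumes s: "(x, ms) \<in> Simp D k" and jl: "j < l" "l \<le> k"
  shows "\<exists>a\<in>Mor D. Dm D a = vert D (x, ms) j \<and> Cd D a = vert D (x, ms) l \<and> \<not> is_identity D a"
  using jl
proof (induction l)
  case 0
  then show ?case by simp
next
  case (Suc l)
  have S: "length ms = k" "0 < k \<longrightarrow> x = Dm D (ms ! 0)"
    "\<forall>p<k. ms ! p \<in> Mor D \<and> \<not> is_identity D (ms ! p)"
    "\<forall>p. Suc p < k \<longrightarrow> Cd D (ms ! p) = Dm D (ms ! Suc p)"
    using s by (simp_all add: Simp_iff)
  have vl: "vert D (x, ms) l = Dm D (ms ! l)"
    using S Suc.prems by (cases l) (auto simp: vert_def)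
  show ?case
  proof (cases "j = l")
    case True
    then show ?thesis using S Suc.prems vl by (auto simp: vert_def intro!: bexI[of _ "ms ! l"])
  next
    case False
    then obtain a where a: "a \<in> Mor D" "Dm D a = vert D (x, ms) j" "Cd D a = vert D (x, ms) l"
        "\<not> is_identity D a"
      using Suc by auto
    have ml: "ms ! l \<in> Mor D" and c: "Cd D a = Dm D (ms ! l)"
      using S Suc.prems a vl by auto
    show ?thesis
      using Cmp_in_Mor[OF a(1) ml c] Dm_Cmp[OF a(1) ml c] Cd_Cmp[OF a(1) ml c]
        Cmp_non_identity[OF a(1) ml c a(4)] a
      by (auto simp: vert_def intro!: bexI[of _ "Cmp D (ms ! l) a"])
  qed
qed

lemma inj_on_vert:
  assumes s: "(x, ms) \<in> Simp D k"
  shows "inj_on (vert D (x, ms)) {..k}"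
proof (rule inj_onI, rule ccontr)
  have no_loop: False if "j < l" "l \<le> k" "vert D (x, ms) j = vert D (x, ms) l" for j l
    using Simp_path[OF s that(1,2)] endomorphism_is_identity that(3) by auto
  fix j l assume "j \<in> {..k}" "l \<in> {..k}" "vert D (x, ms) j = vert D (x, ms) l" "j \<noteq> l"
  then show False
    using no_loop[of j l] no_loop[of l j] by (auto simp: neq_iff)
qed

lemma Simp_eq_empty:
  assumes fin: "finite (Mor D)" and k: "card (Mor D) \<le> k"
  shows "Simp D k = {}"
proof (rule ccontr)
  assume "Simp D k \<noteq> {}"
  then obtain x ms where s: "(x, ms) \<in> Simp D k" by auto
  have "vert D (x, ms) ` {..k} \<subseteq> Ob D" using vert_in_Ob[OF s] by auto
  then have "card {..k} \<le> card (Ob D)"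
    using card_inj_on_le[OF inj_on_vert[OF s]] finite_Ob[OF fin] by blast
  then show False using card_Ob_le_card_Mor[OF fin] k by simp
qed

end

lemma fst_face: "fst (face D s i) = (if i = 0 then Cd D (snd s ! 0) else fst s)"
  by (simp add: face_def Let_def vert_def)

lemma length_face:
  "0 < length (snd s) \<Longrightarrow> i \<le> length (snd s) \<Longrightarrow> length (snd (face D s i)) = length (snd s) - 1"
  by (auto simp: face_def Let_def)

lemma nth_face:
  assumes "i \<le> length (snd s)" "p < length (snd s) - 1"
  shows "snd (face D s i) ! p =
    (if Suc p < i then snd s ! p
     else if Suc p = i then Cmp D (snd s ! i) (snd s ! (i - 1))
     else snd s ! Suc p)"
  using assms by (auto simp: face_def Let_def nth_tl nth_butlast nth_append min_def)

definition incidence :: "('o, 'm) cat \<Rightarrow> nat \<Rightarrow> 'o \<times> 'm list \<Rightarrow> 'o \<times> 'm list \<Rightarrow> rat" where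
  "incidence D k s t = (\<Sum>i\<le>k. if face D s i = t then (-1) ^ i else 0)"

lemma bd_Suc: "bd D (Suc k) c t = (\<Sum>s\<in>Simp D (Suc k). c s * incidence D (Suc k) s t)"
  by (simp add: bd_def incidence_def del: sum.atMost_Suc)

context acyclic_category
begin

lemma Simp_Cmp_adjacent:
  assumes s: "(x, ms) \<in> Simp D (Suc k)" and i: "0 < i" "i < Suc k"
  shows "Cmp D (ms ! i) (ms ! (i - 1)) \<in> Mor D"
    and "\<not> is_identity D (Cmp D (ms ! i) (ms ! (i - 1)))"
    and "Dm D (Cmp D (ms ! i) (ms ! (i - 1))) = Dm D (ms ! (i - 1))"
    and "Cd D (Cmp D (ms ! i) (ms ! (i - 1))) = Cd D (ms ! i)"
proof -
  have a: "ms ! (i - 1) \<in> Mor D" "ms ! i \<in> Mor D" "Cd D (ms ! (i - 1)) = Dm D (ms ! i)"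
    "\<not> is_identity D (ms ! (i - 1))"
    using s i by (auto simp: Simp_iff)
  show "Cmp D (ms ! i) (ms ! (i - 1)) \<in> Mor D"
    and "\<not> is_identity D (Cmp D (ms ! i) (ms ! (i - 1)))"
    and "Dm D (Cmp D (ms ! i) (ms ! (i - 1))) = Dm D (ms ! (i - 1))"
    and "Cd D (Cmp D (ms ! i) (ms ! (i - 1))) = Cd D (ms ! i)"
    using Cmp_in_Mor[OF a(1-3)] Cmp_non_identity[OF a] Dm_Cmp[OF a(1-3)] Cd_Cmp[OF a(1-3)] by auto
qed

lemma face_in_Simp:
  assumes s: "s \<in> Simp D (Suc k)" and i: "i \<le> Suc k"
  shows "face D s i \<in> Simp D k"
proof -
  obtain x ms where xm: "s = (x, ms)" by (cases s)
  have S: "length ms = Suc k" "x = Dm D (ms ! 0)"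
    "\<And>p. p < Suc k \<Longrightarrow> ms ! p \<in> Mor D" "\<And>p. p < Suc k \<Longrightarrow> \<not> is_identity D (ms ! p)"
    "\<And>p. Suc p < Suc k \<Longrightarrow> Cd D (ms ! p) = Dm D (ms ! Suc p)"
    using s xm by (simp_all add: Simp_iff)
  note cmp = Simp_Cmp_adjacent[OF s[unfolded xm]]
  obtain y ns where yn: "face D s i = (y, ns)" by (cases "face D s i")
  have y: "y = (if i = 0 then Cd D (ms ! 0) else x)"
    using fst_face[of D s i] yn xm by simp
  have len: "length ns = k"
    using length_face[of s i D] yn xm S i by simp
  have nth: "ns ! p = (if Suc p < i then ms ! p else if Suc p = i then Cmp D (ms ! i) (ms ! (i - 1))
     else ms ! Suc p)" if "p < k" for p
    using nth_face[of i s p D] yn xm S i that by simp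
  have "k = 0 \<longrightarrow> y \<in> Ob D" using y S Cd_in_Ob Dm_in_Ob by auto
  moreover have "0 < k \<longrightarrow> y = Dm D (ns ! 0)"
    using y nth[of 0] S(2) S(5)[of 0] cmp(3)[of 1] by (cases "i = Suc 0") auto
  moreover have "\<forall>p<k. ns ! p \<in> Mor D \<and> \<not> is_identity D (ns ! p)"
    using nth S(3,4) cmp(1,2) i by auto
  moreover have "Cd D (ns ! p) = Dm D (ns ! Suc p)" if p: "Suc p < k" for p
    using nth[of p] nth[of "Suc p"] p S(5)[of p] S(5)[of "Suc p"] cmp(3,4)[of i] i
    by (cases "Suc (Suc p) < i"; cases "Suc (Suc p) = i"; cases "Suc p = i") auto
  ultimately show ?thesis using yn len by (simp add: Simp_iff)
qed

lemma nth_face_face: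
  assumes s: "s \<in> Simp D (Suc (Suc k))" and ji: "j < i" "i \<le> Suc (Suc k)" and p: "p < k"
  shows "snd (face D (face D s i) j) ! p = snd (face D (face D s j) (i - 1)) ! p"
proof -
  obtain x ms where xm: "s = (x, ms)" by (cases s)
  have S: "length ms = Suc (Suc k)" "\<And>p. p < Suc (Suc k) \<Longrightarrow> ms ! p \<in> Mor D"
    "\<And>p. Suc p < Suc (Suc k) \<Longrightarrow> Cd D (ms ! p) = Dm D (ms ! Suc p)"
    using s xm by (simp_all add: Simp_iff)
  have li: "length (snd (face D s i)) = Suc k" and lj: "length (snd (face D s j)) = Suc k"
    using length_face[of s i D] length_face[of s j D] xm S ji by auto
  have A: "snd (face D s i) ! q = (if Suc q < i then ms ! q
      else if Suc q = i then Cmp D (ms ! i) (ms ! (i - 1)) else ms ! Suc q)" if "q < Suc k" for q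
    using nth_face[of i s q D] xm S ji that by simp
  have B: "snd (face D s j) ! q = (if Suc q < j then ms ! q
      else if Suc q = j then Cmp D (ms ! j) (ms ! (j - 1)) else ms ! Suc q)" if "q < Suc k" for q
    using nth_face[of j s q D] xm S ji that by simp
  have L: "snd (face D (face D s i) j) ! p = (if Suc p < j then snd (face D s i) ! p
      else if Suc p = j then Cmp D (snd (face D s i) ! j) (snd (face D s i) ! (j - 1))
      else snd (face D s i) ! Suc p)"
    using nth_face[of j "face D s i" p D] li ji p by simp
  have R: "snd (face D (face D s j) (i - 1)) ! p = (if Suc p < i - 1 then snd (face D s j) ! p
      else if Suc p = i - 1 then Cmp D (snd (face D s j) ! (i - 1)) (snd (face D s j) ! (i - 1 - 1))
      else snd (face D s j) ! Suc p)"
    using nth_face[of "i - 1" "face D s j" p D] lj ji p by simp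
  consider "Suc p < j" | "Suc p = j" "Suc j < i" | "Suc p = j" "Suc j = i"
    | "j < Suc p" "Suc p < i - 1" | "j < Suc p" "Suc p = i - 1" | "j < Suc p" "i - 1 < Suc p"
    using ji by linarith
  then show ?thesis
  proof cases
    case 3
    text \<open>The two deleted vertices are adjacent: both sides compose three consecutive arrows.\<close>
    have a: "ms ! p \<in> Mor D" "ms ! j \<in> Mor D" "ms ! i \<in> Mor D"
      "Cd D (ms ! p) = Dm D (ms ! j)" "Cd D (ms ! j) = Dm D (ms ! i)"
      using S 3 p by (auto simp flip: 3)
    have "snd (face D (face D s i) j) ! p = Cmp D (Cmp D (ms ! i) (ms ! j)) (ms ! p)"
      using L A[of j] A[of p] 3 p by auto
    moreover have "snd (face D (face D s j) (i - 1)) ! p = Cmp D (ms ! i) (Cmp D (ms ! j) (ms ! p))"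
      using R B[of j] B[of p] 3 p by auto
    ultimately show ?thesis using Cmp_assoc[OF a] by simp
  qed (use L R A B p ji in \<open>auto simp: not_less_eq Suc_diff_Suc\<close>)
qed

lemma face_face:
  assumes s: "s \<in> Simp D (Suc (Suc k))" and ji: "j < i" "i \<le> Suc (Suc k)"
  shows "face D (face D s i) j = face D (face D s j) (i - 1)"
proof (rule prod_eqI)
  obtain x ms where xm: "s = (x, ms)" by (cases s)
  have S: "length ms = Suc (Suc k)" "ms ! 0 \<in> Mor D" "ms ! 1 \<in> Mor D"
    "Cd D (ms ! 0) = Dm D (ms ! 1)"
    using s xm by (simp_all add: Simp_iff)
  have li: "length (snd (face D s i)) = Suc k" and lj: "length (snd (face D s j)) = Suc k"
    using length_face[of s i D] length_face[of s j D] xm S ji by auto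
  show "snd (face D (face D s i) j) = snd (face D (face D s j) (i - 1))"
    using length_face[of "face D s i" j D] length_face[of "face D s j" "i - 1" D] li lj ji
      nth_face_face[OF s ji]
    by (intro nth_equalityI) auto
  show "fst (face D (face D s i) j) = fst (face D (face D s j) (i - 1))"
    using fst_face[of D "face D s i" j] fst_face[of D "face D s j" "i - 1"] fst_face[of D s j]
      fst_face[of D s i] nth_face[of i s 0 D] nth_face[of j s 0 D] ji xm S Cd_Cmp
    by (cases "j = 0"; cases "i = 1") auto
qed

end

lemma double_sum_cancel:
  fixes g :: "nat \<Rightarrow> nat \<Rightarrow> rat"
  assumes antisym: "\<And>i j. j < i \<Longrightarrow> i \<le> Suc m \<Longrightarrow> g j (i - 1) = - g i j"
  shows "(\<Sum>i\<le>Suc m. \<Sum>j\<le>m. g i j) = 0"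
proof -
  let ?P = "{..Suc m} \<times> {..m}"
  let ?A = "?P \<inter> {p. snd p < fst p}" and ?B = "?P - {p. snd p < fst p}"
  have bij: "bij_betw (\<lambda>p. (snd p, fst p - 1)) ?A ?B"
  proof (rule bij_betw_imageI)
    show "inj_on (\<lambda>p. (snd p, fst p - 1)) ?A" by (auto simp: inj_on_def)
    have "p \<in> (\<lambda>p. (snd p, fst p - 1)) ` ?A" if "p \<in> ?B" for p
      using that by (intro image_eqI[of _ _ "(Suc (snd p), fst p)"]) auto
    then show "(\<lambda>p. (snd p, fst p - 1)) ` ?A = ?B" by auto
  qed
  have "(\<Sum>i\<le>Suc m. \<Sum>j\<le>m. g i j) = (\<Sum>p\<in>?P. g (fst p) (snd p))"
    by (simp add: sum.cartesian_product split_beta)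
  also have "\<dots> = (\<Sum>p\<in>?A. g (fst p) (snd p)) + (\<Sum>p\<in>?B. g (fst p) (snd p))"
    by (rule sum.Int_Diff) simp
  also have "(\<Sum>p\<in>?B. g (fst p) (snd p)) = (\<Sum>p\<in>?A. g (snd p) (fst p - 1))"
    using sum.reindex_bij_betw[OF bij, of "\<lambda>p. g (fst p) (snd p)"] by simp
  also have "\<dots> = (\<Sum>p\<in>?A. - g (fst p) (snd p))"
    using antisym by (intro sum.cong) auto
  finally show ?thesis by (simp add: sum_negf)
qed

context acyclic_category
begin

lemma sum_incidence:
  assumes fin: "finite (Simp D k)" and s: "s \<in> Simp D (Suc k)"
  shows "(\<Sum>u\<in>Simp D k. incidence D (Suc k) s u * g u) = (\<Sum>i\<le>Suc k. (-1) ^ i * g (face D s i))"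
proof -
  have "(\<Sum>u\<in>Simp D k. incidence D (Suc k) s u * g u) =
      (\<Sum>i\<le>Suc k. \<Sum>u\<in>Simp D k. if face D s i = u then (-1) ^ i * g u else 0)"
    unfolding incidence_def sum_distrib_right by (subst sum.swap) (intro sum.cong refl; simp)
  also have "\<dots> = (\<Sum>i\<le>Suc k. (-1) ^ i * g (face D s i))"
    using fin face_in_Simp[OF s] by (intro sum.cong) (simp_all add: sum.delta)
  finally show ?thesis .
qed

lemma bd_in_chains:
  assumes c: "c \<in> chains D (Suc k)"
  shows "bd D (Suc k) c \<in> chains D k"
proof -
  have "t \<in> Simp D k" if nz: "bd D (Suc k) c t \<noteq> 0" for t
  proof -
    obtain s where s: "s \<in> Simp D (Suc k)" "c s * incidence D (Suc k) s t \<noteq> 0"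
      using sum.not_neutral_contains_not_neutral[OF nz[unfolded bd_Suc]] by blast
    then have "(\<Sum>i\<le>Suc k. if face D s i = t then (-1::rat) ^ i else 0) \<noteq> 0"
      by (simp add: incidence_def)
    then obtain i where "i \<in> {..Suc k}" "(if face D s i = t then (-1::rat) ^ i else 0) \<noteq> 0"
      by (rule sum.not_neutral_contains_not_neutral)
    then show ?thesis using face_in_Simp[OF s(1)] by (auto split: if_splits)
  qed
  then show ?thesis by (simp add: chains_def supported_def)
qed

lemma alternating_faces_incidence:
  assumes s: "s \<in> Simp D (Suc (Suc k))"
  shows "(\<Sum>i\<le>Suc (Suc k). (-1) ^ i * incidence D (Suc k) (face D s i) t) = 0"
proof -
  have "(\<Sum>i\<le>Suc (Suc k). (-1) ^ i * incidence D (Suc k) (face D s i) t) =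
      (\<Sum>i\<le>Suc (Suc k). \<Sum>j\<le>Suc k. (-1) ^ i * (if face D (face D s i) j = t then (-1) ^ j else 0))"
    unfolding incidence_def by (simp only: sum_distrib_left)
  also have "\<dots> = 0"
  proof (rule double_sum_cancel)
    fix i j assume ij: "j < i" "i \<le> Suc (Suc k)"
    have "(-1::rat) ^ i = - ((-1) ^ (i - 1))"
      using ij by (cases i) auto
    then show "(-1) ^ j * (if face D (face D s j) (i - 1) = t then (-1) ^ (i - 1) else 0) =
        - ((-1) ^ i * (if face D (face D s i) j = t then (-1) ^ j else 0 :: rat))"
      using face_face[OF s ij] by simp
  qed
  finally show ?thesis .
qed

lemma bd_bd:
  assumes fin: "finite (Mor D)"
  shows "bd D (Suc k) (bd D (Suc (Suc k)) c) = (\<lambda>_. 0)"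
proof
  fix t
  let ?I = "incidence D (Suc (Suc k))" and ?J = "\<lambda>u. incidence D (Suc k) u t"
  have "bd D (Suc k) (bd D (Suc (Suc k)) c) t =
      (\<Sum>u\<in>Simp D (Suc k). \<Sum>s\<in>Simp D (Suc (Suc k)). c s * (?I s u * ?J u))"
    unfolding bd_Suc by (simp only: sum_distrib_right mult.assoc)
  also have "\<dots> = (\<Sum>s\<in>Simp D (Suc (Suc k)). c s * (\<Sum>u\<in>Simp D (Suc k). ?I s u * ?J u))"
    by (subst sum.swap) (simp only: sum_distrib_left)
  also have "\<dots> = 0"
    using sum_incidence[OF finite_Simp[OF fin], where g = ?J] alternating_faces_incidence
    by (simp del: sum.atMost_Suc)
  finally show "bd D (Suc k) (bd D (Suc (Suc k)) c) t = 0" .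
qed

end

section \<open>Endofunctors acting on the nerve\<close>

definition simplex_image :: "('o \<Rightarrow> 'o) \<Rightarrow> ('m \<Rightarrow> 'm) \<Rightarrow> 'o \<times> 'm list \<Rightarrow> 'o \<times> 'm list" where
  "simplex_image Fo Fm s = (Fo (fst s), map Fm (snd s))"

definition nondegenerate_image :: "('o, 'm) cat \<Rightarrow> ('m \<Rightarrow> 'm) \<Rightarrow> 'o \<times> 'm list \<Rightarrow> bool" where
  "nondegenerate_image D Fm s \<longleftrightarrow> (\<forall>a\<in>set (snd s). \<not> is_identity D (Fm a))"

lemma chain_map_eq:
  "chain_map D Fo Fm k c = (\<lambda>t. \<Sum>s\<in>Simp D k.
     if nondegenerate_image D Fm s \<and> simplex_image Fo Fm s = t then c s else 0)"
  by (simp add: chain_map_def nondegenerate_image_def simplex_image_def)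

lemma nondegenerate_image_iff_nth:
  "nondegenerate_image D Fm (x, ms) \<longleftrightarrow> (\<forall>p<length ms. \<not> is_identity D (Fm (ms ! p)))"
  by (simp add: nondegenerate_image_def all_set_conv_all_nth)

lemma qlinear_chain_map: "qlinear (chain_map D Fo Fm k)"
proof -
  have "(if P then a * x + b * y else 0) = a * (if P then x else 0) + b * (if P then y else (0::rat))"
    for P a b x y by simp
  then show ?thesis
    unfolding qlinear_def chain_map_def by (simp add: fun_eq_iff sum.distrib sum_distrib_left)
qed

lemma nth_in_face:
  assumes "length ns = Suc k" "j < Suc k" "i \<le> Suc k" "i \<noteq> j" "i \<noteq> Suc j"
  shows "ns ! j \<in> set (snd (face D (y, ns) i))"
proof -
  have len: "length (snd (face D (y, ns) i)) = k" using length_face[of "(y, ns)" i D] assms by simp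
  show ?thesis
  proof (cases "Suc j < i")
    case True
    then have "snd (face D (y, ns) i) ! j = ns ! j" "j < k"
      using nth_face[of i "(y, ns)" j D] assms by auto
    then show ?thesis using len by (metis nth_mem)
  next
    case False
    then have "snd (face D (y, ns) i) ! (j - 1) = ns ! j" "j - 1 < k"
      using nth_face[of i "(y, ns)" "j - 1" D] assms by auto
    then show ?thesis using len by (metis nth_mem)
  qed
qed

context acyclic_category
begin

lemma face_identity_arrow:
  assumes len: "length ns = Suc k" and M: "\<And>p. p < Suc k \<Longrightarrow> ns ! p \<in> Mor D"
    and C: "\<And>p. Suc p < Suc k \<Longrightarrow> Cd D (ns ! p) = Dm D (ns ! Suc p)"
    and y: "y = Dm D (ns ! 0)" and j: "j < Suc k" and idj: "is_identity D (ns ! j)"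
  shows "face D (y, ns) j = face D (y, ns) (Suc j)"
proof (rule prod_eqI)
  have idj': "ns ! j = Idt D (Dm D (ns ! j))" using idj by (simp add: is_identity_def)
  have dc: "Cd D (ns ! j) = Dm D (ns ! j)" using idj' Cd_Idt[OF Dm_in_Ob[OF M[OF j]]] by metis
  show "fst (face D (y, ns) j) = fst (face D (y, ns) (Suc j))"
    using fst_face[of D "(y, ns)" j] fst_face[of D "(y, ns)" "Suc j"] y dc by auto
  have l1: "length (snd (face D (y, ns) j)) = k" and l2: "length (snd (face D (y, ns) (Suc j))) = k"
    using length_face[of "(y, ns)" j D] length_face[of "(y, ns)" "Suc j" D] len j by simp_all
  have left: "Cmp D (ns ! j) (ns ! (j - 1)) = ns ! (j - 1)" if "0 < j"
    using idj' C[of "j - 1"] Cmp_Idt_left[OF M[of "j - 1"]] that j by simp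
  have right: "Cmp D (ns ! Suc j) (ns ! j) = ns ! Suc j" if "Suc j < Suc k"
    using idj' C[of j] dc Cmp_Idt_right[OF M[of "Suc j"]] that by simp
  show "snd (face D (y, ns) j) = snd (face D (y, ns) (Suc j))"
  proof (rule nth_equalityI)
    fix p assume "p < length (snd (face D (y, ns) j))"
    then have p: "p < k" using l1 by simp
    then show "snd (face D (y, ns) j) ! p = snd (face D (y, ns) (Suc j)) ! p"
      using nth_face[of j "(y, ns)" p D] nth_face[of "Suc j" "(y, ns)" p D] len j left right
      by (cases "Suc p = j") auto
  qed (use l1 l2 in simp)
qed

end

locale fin_acyclic_endofunctor = acyclic_category +
  fixes Fo :: "'o \<Rightarrow> 'o" and Fm :: "'m \<Rightarrow> 'm"
  assumes finite_Mor: "finite (Mor D)"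
    and endofunctor: "is_functor D Fo Fm"
begin

lemma Fo_in_Ob: "x \<in> Ob D \<Longrightarrow> Fo x \<in> Ob D"
  and Fm_in_Mor: "a \<in> Mor D \<Longrightarrow> Fm a \<in> Mor D"
  and Dm_Fm: "a \<in> Mor D \<Longrightarrow> Dm D (Fm a) = Fo (Dm D a)"
  and Cd_Fm: "a \<in> Mor D \<Longrightarrow> Cd D (Fm a) = Fo (Cd D a)"
  and Fm_Idt: "x \<in> Ob D \<Longrightarrow> Fm (Idt D x) = Idt D (Fo x)"
  and Fm_Cmp: "a \<in> Mor D \<Longrightarrow> b \<in> Mor D \<Longrightarrow> Cd D a = Dm D b \<Longrightarrow> Fm (Cmp D b a) = Cmp D (Fm b) (Fm a)"
  using endofunctor by (simp_all add: is_functor_def)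

lemma simplex_image_in_Simp:
  assumes s: "s \<in> Simp D k" and nd: "nondegenerate_image D Fm s"
  shows "simplex_image Fo Fm s \<in> Simp D k"
proof -
  obtain x ms where xm: "s = (x, ms)" by (cases s)
  show ?thesis
    using s nd Fo_in_Ob Fm_in_Mor Dm_Fm Cd_Fm
    unfolding xm simplex_image_def by (auto simp: Simp_iff nondegenerate_image_iff_nth)
qed

lemma face_simplex_image:
  assumes s: "s \<in> Simp D (Suc k)" and i: "i \<le> Suc k"
  shows "face D (simplex_image Fo Fm s) i = simplex_image Fo Fm (face D s i)"
proof (rule prod_eqI)
  obtain x ms where xm: "s = (x, ms)" by (cases s)
  have S: "length ms = Suc k" "\<And>p. p < Suc k \<Longrightarrow> ms ! p \<in> Mor D"
    "\<And>p. Suc p < Suc k \<Longrightarrow> Cd D (ms ! p) = Dm D (ms ! Suc p)"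
    using s xm by (simp_all add: Simp_iff)
  show "fst (face D (simplex_image Fo Fm s) i) = fst (simplex_image Fo Fm (face D s i))"
    using fst_face[of D "simplex_image Fo Fm s" i] fst_face[of D s i] xm S Cd_Fm
    by (simp add: simplex_image_def)
  have l1: "length (snd (face D (simplex_image Fo Fm s) i)) = k"
    and l2: "length (snd (face D s i)) = k"
    using length_face[of "simplex_image Fo Fm s" i D] length_face[of s i D] xm S i
    by (simp_all add: simplex_image_def)
  have Fm_Cmp_at: "Fm (Cmp D (ms ! i) (ms ! (i - 1))) = Cmp D (Fm (ms ! i)) (Fm (ms ! (i - 1)))"
    if "0 < i" "i < Suc k"
    using Fm_Cmp[of "ms ! (i - 1)" "ms ! i"] S(2)[of "i - 1"] S(2)[of i] S(3)[of "i - 1"] that by simp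
  show "snd (face D (simplex_image Fo Fm s) i) = snd (simplex_image Fo Fm (face D s i))"
  proof (rule nth_equalityI)
    fix p assume "p < length (snd (face D (simplex_image Fo Fm s) i))"
    then have p: "p < k" using l1 by simp
    then show "snd (face D (simplex_image Fo Fm s) i) ! p = snd (simplex_image Fo Fm (face D s i)) ! p"
      using nth_face[of i "simplex_image Fo Fm s" p D] nth_face[of i s p D] xm S i l2 Fm_Cmp_at
      by (auto simp: simplex_image_def)
  qed (use l1 l2 in \<open>simp add: simplex_image_def\<close>)
qed

lemma nondegenerate_image_face:
  assumes s: "s \<in> Simp D (Suc k)" and i: "i \<le> Suc k" and nd: "nondegenerate_image D Fm s"
  shows "nondegenerate_image D Fm (face D s i)"
proof -
  obtain x ms where xm: "s = (x, ms)" by (cases s)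
  have S: "length ms = Suc k" "\<And>p. p < Suc k \<Longrightarrow> ms ! p \<in> Mor D"
    "\<And>p. Suc p < Suc k \<Longrightarrow> Cd D (ms ! p) = Dm D (ms ! Suc p)"
    using s xm by (simp_all add: Simp_iff)
  have N: "\<And>p. p < Suc k \<Longrightarrow> \<not> is_identity D (Fm (ms ! p))"
    using nd xm S(1) by (simp add: nondegenerate_image_iff_nth)
  have len: "length (snd (face D s i)) = k" using length_face[of s i D] xm S i by simp
  have "\<not> is_identity D (Fm (Cmp D (ms ! i) (ms ! (i - 1))))" if "0 < i" "i < Suc k"
  proof -
    have a: "ms ! (i - 1) \<in> Mor D" "ms ! i \<in> Mor D" "Cd D (ms ! (i - 1)) = Dm D (ms ! i)"
      using S that by auto
    then have "Fm (ms ! (i - 1)) \<in> Mor D" "Fm (ms ! i) \<in> Mor D"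
      "Cd D (Fm (ms ! (i - 1))) = Dm D (Fm (ms ! i))"
      using Fm_in_Mor Cd_Fm Dm_Fm by auto
    then show ?thesis
      using Fm_Cmp[OF a] Cmp_non_identity N[of "i - 1"] that by simp
  qed
  then have "\<not> is_identity D (Fm (snd (face D s i) ! p))" if "p < k" for p
    using nth_face[of i s p D] xm S i N that by auto
  then show ?thesis using len by (cases "face D s i") (simp add: nondegenerate_image_iff_nth)
qed

text \<open>If F collapses the arrow j of s, the image faces j and j+1 coincide and cancel,
  while every other face still contains that arrow.\<close>

lemma degenerate_image_faces_cancel:
  assumes s: "s \<in> Simp D (Suc k)" and deg: "\<not> nondegenerate_image D Fm s"
  shows "(\<Sum>i\<le>Suc k. (-1) ^ i *
     (if nondegenerate_image D Fm (face D s i) \<and> simplex_image Fo Fm (face D s i) = t then 1 else 0 :: rat)) = 0"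
proof -
  obtain x ms where xm: "s = (x, ms)" by (cases s)
  have S: "length ms = Suc k" "x = Dm D (ms ! 0)" "\<And>p. p < Suc k \<Longrightarrow> ms ! p \<in> Mor D"
    "\<And>p. Suc p < Suc k \<Longrightarrow> Cd D (ms ! p) = Dm D (ms ! Suc p)"
    using s xm by (simp_all add: Simp_iff)
  obtain j where j: "j < Suc k" "is_identity D (Fm (ms ! j))"
    using deg xm S(1) by (auto simp: nondegenerate_image_iff_nth)
  define g where "g i = (if nondegenerate_image D Fm (face D s i) \<and>
      simplex_image Fo Fm (face D s i) = t then 1 else 0 :: rat)" for i
  have g0: "g i = 0" if "i \<le> Suc k" "i \<noteq> j" "i \<noteq> Suc j" for i
  proof -
    have "ms ! j \<in> set (snd (face D s i))" using nth_in_face[of ms k j i D x] S j that xm by simp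
    then show ?thesis using j by (auto simp: nondegenerate_image_def g_def)
  qed
  have "face D (simplex_image Fo Fm s) j = face D (simplex_image Fo Fm s) (Suc j)"
    unfolding xm simplex_image_def
    by (rule face_identity_arrow[where k = k]) (use j S Fm_in_Mor Cd_Fm Dm_Fm in simp_all)
  then have "simplex_image Fo Fm (face D s j) = simplex_image Fo Fm (face D s (Suc j))"
    using face_simplex_image[OF s, of j] face_simplex_image[OF s, of "Suc j"] j by simp
  moreover have "g i = (if (\<forall>b\<in>set (snd (simplex_image Fo Fm (face D s i))). \<not> is_identity D b) \<and>
      simplex_image Fo Fm (face D s i) = t then 1 else 0)" for i
    by (simp add: g_def nondegenerate_image_def simplex_image_def)
  ultimately have "g j = g (Suc j)" by presburger
  moreover have "(\<Sum>i\<le>Suc k. (-1) ^ i * g i) = (\<Sum>i\<in>{j, Suc j}. (-1) ^ i * g i)"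
    by (rule sum.mono_neutral_right) (use j g0 in auto)
  ultimately show ?thesis by (simp add: g_def)
qed

lemma chain_map_in_chains: "c \<in> chains D k \<Longrightarrow> chain_map D Fo Fm k c \<in> chains D k"
proof -
  have "t \<in> Simp D k" if nz: "chain_map D Fo Fm k c t \<noteq> 0" for t
  proof -
    obtain s where s: "s \<in> Simp D k"
      "(if nondegenerate_image D Fm s \<and> simplex_image Fo Fm s = t then c s else 0) \<noteq> 0"
      using sum.not_neutral_contains_not_neutral[OF nz[unfolded chain_map_eq]] by blast
    then show ?thesis using simplex_image_in_Simp[OF s(1)] by (auto split: if_splits)
  qed
  then show "chain_map D Fo Fm k c \<in> chains D k" by (simp add: chains_def supported_def)
qed

lemma sum_chain_map:
  "(\<Sum>u\<in>Simp D k. chain_map D Fo Fm k c u * g u) =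
   (\<Sum>s\<in>Simp D k. if nondegenerate_image D Fm s then c s * g (simplex_image Fo Fm s) else 0)"
proof -
  have "(\<Sum>u\<in>Simp D k. chain_map D Fo Fm k c u * g u) = (\<Sum>s\<in>Simp D k. \<Sum>u\<in>Simp D k.
      if nondegenerate_image D Fm s \<and> simplex_image Fo Fm s = u then c s * g u else 0)"
    unfolding chain_map_eq sum_distrib_right by (subst sum.swap) (intro sum.cong refl; simp)
  also have "\<dots> = (\<Sum>s\<in>Simp D k. if nondegenerate_image D Fm s then c s * g (simplex_image Fo Fm s) else 0)"
    using finite_Simp[OF finite_Mor] simplex_image_in_Simp
    by (intro sum.cong refl) (simp add: sum.delta)
  finally show ?thesis .
qed

lemma bd_chain_map:
  "bd D (Suc k) (chain_map D Fo Fm (Suc k) c) = chain_map D Fo Fm k (bd D (Suc k) c)"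
proof
  fix t
  define G where "G u = (if nondegenerate_image D Fm u \<and> simplex_image Fo Fm u = t then 1 else 0 :: rat)" for u
  have per_simplex: "(\<Sum>i\<le>Suc k. (-1) ^ i * G (face D s i)) =
      (if nondegenerate_image D Fm s then incidence D (Suc k) (simplex_image Fo Fm s) t else 0)"
    if s: "s \<in> Simp D (Suc k)" for s
  proof (cases "nondegenerate_image D Fm s")
    case True
    then show ?thesis unfolding G_def incidence_def
      by (auto intro!: sum.cong simp: nondegenerate_image_face[OF s] face_simplex_image[OF s])
  next
    case False
    then show ?thesis using degenerate_image_faces_cancel[OF s False, of t] by (simp add: G_def)
  qed
  have "bd D (Suc k) (chain_map D Fo Fm (Suc k) c) t = (\<Sum>s\<in>Simp D (Suc k).
      if nondegenerate_image D Fm s then c s * incidence D (Suc k) (simplex_image Fo Fm s) t else 0)"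
    unfolding bd_Suc by (rule sum_chain_map)
  also have "\<dots> = (\<Sum>s\<in>Simp D (Suc k). c s * (\<Sum>i\<le>Suc k. (-1) ^ i * G (face D s i)))"
    using per_simplex by (intro sum.cong) auto
  also have "\<dots> = (\<Sum>s\<in>Simp D (Suc k). c s * (\<Sum>u\<in>Simp D k. incidence D (Suc k) s u * G u))"
    using sum_incidence[OF finite_Simp[OF finite_Mor]] by simp
  also have "\<dots> = (\<Sum>u\<in>Simp D k. G u * bd D (Suc k) c u)"
    unfolding bd_Suc sum_distrib_left by (subst sum.swap) (simp add: algebra_simps)
  also have "\<dots> = chain_map D Fo Fm k (bd D (Suc k) c) t"
    unfolding chain_map_eq G_def by (intro sum.cong refl) simp
  finally show "bd D (Suc k) (chain_map D Fo Fm (Suc k) c) t = chain_map D Fo Fm k (bd D (Suc k) c) t" .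
qed

lemma chain_map_indicator:
  assumes "s \<in> Simp D k"
  shows "chain_map D Fo Fm k (\<lambda>t. if t = s then 1 else 0) s =
    (if nondegenerate_image D Fm s \<and> simplex_image Fo Fm s = s then 1 else 0)"
proof -
  have "chain_map D Fo Fm k (\<lambda>t. if t = s then 1 else 0) s = (\<Sum>s'\<in>Simp D k.
      if s' = s then (if nondegenerate_image D Fm s \<and> simplex_image Fo Fm s = s then 1 else 0) else 0)"
    unfolding chain_map_eq by (intro sum.cong refl) auto
  then show ?thesis using assms finite_Simp[OF finite_Mor] by simp
qed

end

section \<open>Lefschetz numbers as counts of fixed simplices\<close>

lemma nerve_chain_map_id:
  assumes "finite_acyclic_cat D"
  shows "nerve_chain_map D (\<lambda>k c. c)"
proof -
  interpret acyclic_category D using assms by unfold_locales (simp add: finite_acyclic_cat_def)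
  have "finite (Mor D)" using assms by (simp add: finite_acyclic_cat_def)
  then show ?thesis
    by unfold_locales (simp_all add: finite_Simp bd_in_chains bd_bd qlinear_id)
qed

lemma euler_eq_simplex_count:
  assumes D: "finite_acyclic_cat D"
  shows "(of_int (euler D) :: rat) = (\<Sum>i\<le>card (Mor D). (-1) ^ i * of_nat (card (Simp D i)))"
proof -
  interpret H: nerve_chain_map D "\<lambda>k c. c" by (rule nerve_chain_map_id[OF D])
  interpret acyclic_category D using D by unfold_locales (simp add: finite_acyclic_cat_def)
  have fin: "finite (Mor D)" using D by (simp add: finite_acyclic_cat_def)
  have "(of_int (euler D) :: rat) =
      (\<Sum>i\<le>card (Mor D). (-1) ^ i * quot_trace (cycles D i) (boundaries D i) (\<lambda>x. x))"
    unfolding euler_def by (simp add: H.quot_dim_homology)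
  also have "\<dots> = (\<Sum>i\<le>card (Mor D). (-1) ^ i * subspace_trace (chains D i) (\<lambda>x. x))"
    using H.hopf_trace_formula[of "card (Mor D)"] Simp_eq_empty[OF fin] by simp
  also have "\<dots> = (\<Sum>i\<le>card (Mor D). (-1) ^ i * of_nat (card (Simp D i)))"
    using H.trace_chains_eq_sum by simp
  finally show ?thesis .
qed

context fin_acyclic_endofunctor
begin

lemma chain_map_is_nerve_chain_map: "nerve_chain_map D (chain_map D Fo Fm)"
  by unfold_locales (simp_all add: finite_Simp[OF finite_Mor] bd_in_chains bd_bd[OF finite_Mor]
      qlinear_chain_map chain_map_in_chains bd_chain_map)

lemma lefschetz_eq_fixed_simplex_count:
  "lefschetz D Fo Fm = (\<Sum>i\<le>card (Mor D). (-1) ^ i *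
     of_nat (card {s \<in> Simp D i. nondegenerate_image D Fm s \<and> simplex_image Fo Fm s = s}))"
proof -
  interpret L: nerve_chain_map D "chain_map D Fo Fm" by (rule chain_map_is_nerve_chain_map)
  have "lefschetz D Fo Fm = (\<Sum>i\<le>card (Mor D). (-1) ^ i * subspace_trace (chains D i) (chain_map D Fo Fm i))"
    unfolding lefschetz_def by (rule L.hopf_trace_formula) (simp add: Simp_eq_empty[OF finite_Mor])
  also have "\<dots> = (\<Sum>i\<le>card (Mor D). (-1) ^ i * of_nat (card {s \<in> Simp D i.
      nondegenerate_image D Fm s \<and> simplex_image Fo Fm s = s}))"
    using finite_Simp[OF finite_Mor]
    by (simp add: L.trace_chains_eq_sum chain_map_indicator sum.If_cases Int_def cong: sum.cong)
  finally show ?thesis .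
qed

end

lemma fixed_cat_simps [simp]:
  "Ob (fixed_cat C Fo Fm) = {x \<in> Ob C. Fo x = x}" "Mor (fixed_cat C Fo Fm) = {a \<in> Mor C. Fm a = a}"
  "Dm (fixed_cat C Fo Fm) = Dm C" "Cd (fixed_cat C Fo Fm) = Cd C" "Idt (fixed_cat C Fo Fm) = Idt C"
  "Cmp (fixed_cat C Fo Fm) = Cmp C"
  by (simp_all add: fixed_cat_def)

lemma is_identity_fixed_cat [simp]: "is_identity (fixed_cat C Fo Fm) a = is_identity C a"
  by (simp add: is_identity_def)

lemma finite_acyclic_fixed_cat:
  assumes "finite_acyclic_cat C" and "is_functor C Fo Fm"
  shows "finite_acyclic_cat (fixed_cat C Fo Fm)"
proof -
  interpret fin_acyclic_endofunctor C Fo Fm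
    using assms by unfold_locales (simp_all add: finite_acyclic_cat_def)
  have "is_category (fixed_cat C Fo Fm)"
    unfolding is_category_def fixed_cat_simps
    by (auto simp: Dm_in_Ob Cd_in_Ob Idt_in_Mor Dm_Idt Cd_Idt Cmp_in_Mor Dm_Cmp Cd_Cmp Cmp_assoc
        Cmp_Idt_left Cmp_Idt_right Fm_Idt Fm_Cmp simp flip: Dm_Fm Cd_Fm)
  then have "acyclic_cat (fixed_cat C Fo Fm)"
    using acyclic unfolding acyclic_cat_def fixed_cat_simps is_identity_fixed_cat by blast
  then show ?thesis using finite_Mor by (simp add: finite_acyclic_cat_def)
qed

context fin_acyclic_endofunctor
begin

lemma fixed_simplices_eq_Simp_fixed_cat:
  "{s \<in> Simp D i. nondegenerate_image D Fm s \<and> simplex_image Fo Fm s = s} = Simp (fixed_cat D Fo Fm) i"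
proof -
  have fixed_list: "map Fm ms = ms \<longleftrightarrow> (\<forall>a\<in>set ms. Fm a = a)" for ms
    using map_eq_conv[of Fm ms "\<lambda>x. x"] by simp
  show ?thesis
    by (auto simp: Simp_def simplex_image_def nondegenerate_image_def fixed_list subset_iff)
      (metis Dm_Fm hd_in_set)
qed

end

theorem lefschetz_eq_euler_fixed_cat:
  assumes "finite_acyclic_cat C" and "is_functor C Fo Fm"
  shows "lefschetz C Fo Fm = of_int (euler (fixed_cat C Fo Fm))"
proof -
  interpret fin_acyclic_endofunctor C Fo Fm
    using assms by unfold_locales (simp_all add: finite_acyclic_cat_def)
  have le: "card (Mor (fixed_cat C Fo Fm)) \<le> card (Mor C)"
    using finite_Mor by (simp add: card_mono)
  have "lefschetz C Fo Fm = (\<Sum>i\<le>card (Mor C). (-1) ^ i * of_nat (card (Simp (fixed_cat C Fo Fm) i)))"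
    by (simp add: lefschetz_eq_fixed_simplex_count fixed_simplices_eq_Simp_fixed_cat)
  also have "\<dots> = (\<Sum>i\<le>card (Mor (fixed_cat C Fo Fm)). (-1) ^ i * of_nat (card (Simp (fixed_cat C Fo Fm) i)))"
    using finite_acyclic_fixed_cat[OF assms] le acyclic_category.Simp_eq_empty[of "fixed_cat C Fo Fm"]
    by (intro sum.mono_neutral_right) (auto simp: finite_acyclic_cat_def acyclic_category_def)
  also have "\<dots> = of_int (euler (fixed_cat C Fo Fm))"
    by (rule euler_eq_simplex_count[OF finite_acyclic_fixed_cat[OF assms], symmetric])
  finally show ?thesis .
qed

lemma euler_eq_0_if_no_objects:
  assumes D: "finite_acyclic_cat D" and "Ob D = {}"
  shows "euler D = 0"
proof -
  interpret acyclic_category D using D by unfold_locales (simp add: finite_acyclic_cat_def)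
  have "Simp D i = {}" for i
    using Simp_fst_in_Ob \<open>Ob D = {}\<close> by fast
  then have "(of_int (euler D) :: rat) = 0" by (simp add: euler_eq_simplex_count[OF D])
  then show ?thesis by simp
qed

lemma Rcat_simps [simp]:
  "Ob (Rcat C) = Ob C" "Mor (Rcat C) = {(x, y). x \<in> Ob C \<and> y \<in> Ob C \<and> reach C x y}"
  "Dm (Rcat C) = fst" "Cd (Rcat C) = snd" "Idt (Rcat C) = (\<lambda>x. (x, x))"
  "Cmp (Rcat C) = (\<lambda>b a. (fst a, snd b))"
  by (simp_all add: Rcat_def poset_cat_def)

lemma finite_acyclic_Rcat:
  assumes C: "finite_acyclic_cat C"
  shows "finite_acyclic_cat (Rcat C)"
proof -
  interpret acyclic_category C using C by unfold_locales (simp add: finite_acyclic_cat_def)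
  have "is_category (Rcat C)"
    unfolding is_category_def Rcat_simps by (auto intro: reach_refl reach_trans)
  moreover have "is_identity (Rcat C) a \<longleftrightarrow> fst a = snd a" for a
    by (cases a) (auto simp: is_identity_def)
  ultimately have "acyclic_cat (Rcat C)"
    unfolding acyclic_cat_def by (auto intro: reach_antisym)
  moreover have "finite (Mor (Rcat C))"
    using finite_Ob C by (auto simp: finite_acyclic_cat_def intro: finite_subset[of _ "Ob C \<times> Ob C"])
  ultimately show ?thesis by (simp add: finite_acyclic_cat_def)
qed

lemma is_functor_Rmor:
  assumes "finite_acyclic_cat C" and "is_functor C Fo Fm"
  shows "is_functor (Rcat C) Fo (Rmor Fo)"
proof -
  interpret fin_acyclic_endofunctor C Fo Fm
    using assms by unfold_locales (simp_all add: finite_acyclic_cat_def)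
  have "reach C (Fo x) (Fo y)" if "reach C x y" for x y
    using that Fm_in_Mor Dm_Fm Cd_Fm unfolding reach_def by metis
  then show ?thesis unfolding is_functor_def Rcat_simps Rmor_def by (auto simp: Fo_in_Ob)
qed

lemma fixed_cat_Rcat: "fixed_cat (Rcat C) Fo (Rmor Fo) = Rfix C Fo"
  unfolding fixed_cat_def Rcat_def Rfix_def poset_cat_def Rmor_def by (auto simp: set_eq_iff)

theorem mainTheorem1:
  fixes C :: "('o, 'm) cat" and Fo :: "'o \<Rightarrow> 'o" and Fm :: "'m \<Rightarrow> 'm"
  assumes "finite_acyclic_cat C"
    and "is_functor C Fo Fm"
  shows "lefschetz (Rcat C) Fo (Rmor Fo) = of_int (euler (Rfix C Fo)) \<and>
         lefschetz C Fo Fm = of_int (euler (fixed_cat C Fo Fm)) \<and>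
         ((lefschetz (Rcat C) Fo (Rmor Fo) \<noteq> 0 \<or> lefschetz C Fo Fm \<noteq> 0)
            \<longrightarrow> (\<exists>x\<in>Ob C. Fo x = x))"
proof -
  have R: "finite_acyclic_cat (Rcat C)" by (rule finite_acyclic_Rcat[OF assms(1)])
  have RF: "is_functor (Rcat C) Fo (Rmor Fo)" by (rule is_functor_Rmor[OF assms])
  have a: "lefschetz (Rcat C) Fo (Rmor Fo) = of_int (euler (Rfix C Fo))"
    using lefschetz_eq_euler_fixed_cat[OF R RF] by (simp add: fixed_cat_Rcat)
  have b: "lefschetz C Fo Fm = of_int (euler (fixed_cat C Fo Fm))"
    by (rule lefschetz_eq_euler_fixed_cat[OF assms])
  have "\<exists>x\<in>Ob C. Fo x = x" if "lefschetz (Rcat C) Fo (Rmor Fo) \<noteq> 0 \<or> lefschetz C Fo Fm \<noteq> 0"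
  proof (rule ccontr)
    assume "\<not> (\<exists>x\<in>Ob C. Fo x = x)"
    then have "euler (fixed_cat (Rcat C) Fo (Rmor Fo)) = 0" "euler (fixed_cat C Fo Fm) = 0"
      by (auto intro!: euler_eq_0_if_no_objects finite_acyclic_fixed_cat R RF assms)
    then show False using that a b by (simp add: fixed_cat_Rcat)
  qed
  with a b show ?thesis by blast
qed

end
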